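(* Let $L\subset S^3$ be an oriented link, $\widehat{\mathcal{B}}_L$ its topological biquandle, and $A$ a generating set of $\widehat{\mathcal{B}}_L$. Then every element of $\widehat{\mathcal{B}}_L$ can be expressed in the form $(a\uparrow w_1)\downarrow w_2$, where $a\in A$ and $w_1,w_2$ are words in the free group $F(A)$ on $A$.
   Context: An oriented link $L$ is an oriented subspace of $S^3$ homeomorphic to a finite disjoint union of circles. Let $N_L$ be a regular neighborhood of $L$ and $E_L$ the closure of $S^3\setminus N_L$; the orientation of $L$ induces an orientation of its normal bundle by the right-hand rule. Choose a 3-ball $B^3\subset S^3$ with $N_L\subset B^3$ and antipodal points $z_0,z_1\in\partial B^3$. For a path $a$, $\overline{a}(t)=a(1-t)$; $a\cdot b$ is concatenation. Let $\mathcal{B}_L$ be the set of pairs $(a_0,a_1)$ with $a_i\colon[0,1]\to E_L$ a path from a point of $\partial N_L$ to $z_i$ and $a_0(0)=a_1(0)$. Set $(a_0,a_1)\sim(b_0,b_1)$ if there is a homotopy $H_t\colon[0,1]\to E_L$ with $H_0=\overline{a_0}\cdot a_1$, $H_1=\overline{b_0}\cdot b_1$, $H_t(0)=z_0$, $H_t(1)=z_1$, $H_t(\tfrac12)\in\partial N_L$ for all $t$. The topological biquandle is $\widehat{\mathcal{B}}_L=\mathcal{B}_L/\!\sim$ (classes $[a_0,a_1]$) with operations $[a_0,a_1]\uparrow[b_0,b_1]=[a_0\cdot\overline{b_0}\cdot m_{b_0(0)}\cdot b_0,\ a_1]$ and $[a_0,a_1]\downarrow[b_0,b_1]=[a_0,\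 a_1\cdot\overline{b_1}\cdot m_{b_1(0)}\cdot b_1]$, where for $p\in\partial N_L$, $m_p$ is the loop in $\partial N_L$ at $p$ going once positively around the meridian of the corresponding component of $L$; it is a biquandle. In a biquandle with $S(x,y)=(y\downarrow x,\ x\uparrow y)$, the bar operations are defined by $S^{-1}(a,b)=(b\Uparrow a,\ a\Downarrow b)$. A generating set is a subset $A$ such that the smallest subset containing $A$ and closed under $\uparrow,\downarrow,\Uparrow,\Downarrow$ is the whole biquandle. For a word $w=x_1^{\epsilon_1}\cdots x_k^{\epsilon_k}$ ($x_i\in A$, $\epsilon_i=\pm1$) and an element $y$, $y\uparrow w$ denotes $(\cdots((y\uparrow_{\epsilon_1}x_1)\uparrow_{\epsilon_2}x_2)\cdots)\uparrow_{\epsilon_k}x_k$ where $\uparrow_{+1}=\uparrow$ and $\uparrow_{-1}=\Uparrow$; similarly $y\downarrow w$ with $\downarrow_{+1}=\downarrow$, $\downarrow_{-1}=\Downarrow$. *)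

theory Defs
  imports "HOL-Analysis.Analysis"
begin

definition S3 :: "(real^4) set" where
  "S3 = sphere 0 1"

text \<open>A link with n components together with a closed regular (tubular) neighbourhood is
  given by an embedding  phi : {0..<n} x S^1 x D^2 -> S^3.  Component i of the link is
  z |-> phi i z 0 (oriented by the counterclockwise orientation of the unit circle z),
  and the disk coordinate w gives the normal disks.\<close>

definition tubular :: "nat \<Rightarrow> (nat \<Rightarrow> complex \<Rightarrow> complex \<Rightarrow> real^4) \<Rightarrow> bool" where
  "tubular n phi \<longleftrightarrow>
     (\<forall>i<n. continuous_on (sphere 0 1 \<times> cball 0 1) (\<lambda>(z,w). phi i z w)) \<and>
     (\<forall>i<n. (\<lambda>(z,w). phi i z w) ` (sphere 0 1 \<times> cball 0 1) \<subseteq> S3) \<and>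
     (\<forall>i<n. \<forall>j<n. \<forall>z\<in>sphere 0 1. \<forall>w\<in>cball 0 1. \<forall>z'\<in>sphere 0 1. \<forall>w'\<in>cball 0 1.
        phi i z w = phi j z' w' \<longrightarrow> i = j \<and> z = z' \<and> w = w')"

definition link_of :: "nat \<Rightarrow> (nat \<Rightarrow> complex \<Rightarrow> complex \<Rightarrow> real^4) \<Rightarrow> (real^4) set" where
  "link_of n phi = {phi i z 0 | i z. i < n \<and> z \<in> sphere 0 1}"

definition nbhd :: "nat \<Rightarrow> (nat \<Rightarrow> complex \<Rightarrow> complex \<Rightarrow> real^4) \<Rightarrow> (real^4) set" where
  "nbhd n phi = {phi i z w | i z w. i < n \<and> z \<in> sphere 0 1 \<and> w \<in> cball 0 1}"

definition bdry :: "nat \<Rightarrow> (nat \<Rightarrow> complex \<Rightarrow> complex \<Rightarrow> real^4) \<Rightarrow> (real^4) set" where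
  "bdry n phi = {phi i z w | i z w. i < n \<and> z \<in> sphere 0 1 \<and> w \<in> sphere 0 1}"

definition ext :: "nat \<Rightarrow> (nat \<Rightarrow> complex \<Rightarrow> complex \<Rightarrow> real^4) \<Rightarrow> (real^4) set" where
  "ext n phi = closure (S3 - nbhd n phi)"

definition meridian :: "nat \<Rightarrow> (nat \<Rightarrow> complex \<Rightarrow> complex \<Rightarrow> real^4) \<Rightarrow> real^4 \<Rightarrow> real \<Rightarrow> real^4" where
  "meridian n phi p =
     (case (SOME (i,z,w). i < n \<and> z \<in> sphere 0 1 \<and> w \<in> sphere 0 1 \<and> phi i z w = p) of
        (i,z,w) \<Rightarrow> (\<lambda>t. phi i z (w * cis (2 * pi * t))))"

type_synonym bpair = "(real \<Rightarrow> real^4) \<times> (real \<Rightarrow> real^4)"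

definition bpairs :: "nat \<Rightarrow> (nat \<Rightarrow> complex \<Rightarrow> complex \<Rightarrow> real^4) \<Rightarrow> real^4 \<Rightarrow> real^4 \<Rightarrow> bpair set" where
  "bpairs n phi z0 z1 = {(a0, a1). path a0 \<and> path a1 \<and>
      path_image a0 \<subseteq> ext n phi \<and> path_image a1 \<subseteq> ext n phi \<and>
      pathstart a0 \<in> bdry n phi \<and> pathstart a1 = pathstart a0 \<and>
      pathfinish a0 = z0 \<and> pathfinish a1 = z1}"

definition bequiv :: "nat \<Rightarrow> (nat \<Rightarrow> complex \<Rightarrow> complex \<Rightarrow> real^4) \<Rightarrow> real^4 \<Rightarrow> real^4 \<Rightarrow> bpair \<Rightarrow> bpair \<Rightarrow> bool" where
  "bequiv n phi z0 z1 a b \<longleftrightarrow>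
     (\<exists>H :: real \<times> real \<Rightarrow> real^4.
        continuous_on ({0..1} \<times> {0..1}) H \<and>
        H ` ({0..1} \<times> {0..1}) \<subseteq> ext n phi \<and>
        (\<forall>s\<in>{0..1}. H (0, s) = (reversepath (fst a) +++ snd a) s \<and>
                     H (1, s) = (reversepath (fst b) +++ snd b) s) \<and>
        (\<forall>t\<in>{0..1}. H (t, 0) = z0 \<and> H (t, 1) = z1 \<and> H (t, 1/2) \<in> bdry n phi))"

definition brel :: "nat \<Rightarrow> (nat \<Rightarrow> complex \<Rightarrow> complex \<Rightarrow> real^4) \<Rightarrow> real^4 \<Rightarrow> real^4 \<Rightarrow> bpair rel" where
  "brel n phi z0 z1 = {(a, b). a \<in> bpairs n phi z0 z1 \<and> b \<in> bpairs n phi z0 z1 \<and> bequiv n phi z0 z1 a b}"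

definition topbiq :: "nat \<Rightarrow> (nat \<Rightarrow> complex \<Rightarrow> complex \<Rightarrow> real^4) \<Rightarrow> real^4 \<Rightarrow> real^4 \<Rightarrow> bpair set set" where
  "topbiq n phi z0 z1 = bpairs n phi z0 z1 // brel n phi z0 z1"

definition up_rep :: "nat \<Rightarrow> (nat \<Rightarrow> complex \<Rightarrow> complex \<Rightarrow> real^4) \<Rightarrow> bpair \<Rightarrow> bpair \<Rightarrow> bpair" where
  "up_rep n phi a b = (fst a +++ (reversepath (fst b) +++ (meridian n phi (pathstart (fst b)) +++ fst b)), snd a)"

definition down_rep :: "nat \<Rightarrow> (nat \<Rightarrow> complex \<Rightarrow> complex \<Rightarrow> real^4) \<Rightarrow> bpair \<Rightarrow> bpair \<Rightarrow> bpair" where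
  "down_rep n phi a b = (fst a, snd a +++ (reversepath (snd b) +++ (meridian n phi (pathstart (snd b)) +++ snd b)))"

definition bq_up :: "nat \<Rightarrow> (nat \<Rightarrow> complex \<Rightarrow> complex \<Rightarrow> real^4) \<Rightarrow> real^4 \<Rightarrow> real^4 \<Rightarrow> bpair set \<Rightarrow> bpair set \<Rightarrow> bpair set" where
  "bq_up n phi z0 z1 X Y = brel n phi z0 z1 `` {up_rep n phi (SOME a. a \<in> X) (SOME b. b \<in> Y)}"

definition bq_down :: "nat \<Rightarrow> (nat \<Rightarrow> complex \<Rightarrow> complex \<Rightarrow> real^4) \<Rightarrow> real^4 \<Rightarrow> real^4 \<Rightarrow> bpair set \<Rightarrow> bpair set \<Rightarrow> bpair set" where
  "bq_down n phi z0 z1 X Y = brel n phi z0 z1 `` {down_rep n phi (SOME a. a \<in> X) (SOME b. b \<in> Y)}"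

text \<open>With S(x,y) = (y down x, x up y), the bar operations are given by
  S^{-1}(a,b) = (b Up a, a Down b).\<close>

definition bar_up :: "'a set \<Rightarrow> ('a \<Rightarrow> 'a \<Rightarrow> 'a) \<Rightarrow> ('a \<Rightarrow> 'a \<Rightarrow> 'a) \<Rightarrow> 'a \<Rightarrow> 'a \<Rightarrow> 'a" where
  "bar_up X up down b a = (THE x. x \<in> X \<and> (\<exists>y\<in>X. down y x = a \<and> up x y = b))"

definition bar_down :: "'a set \<Rightarrow> ('a \<Rightarrow> 'a \<Rightarrow> 'a) \<Rightarrow> ('a \<Rightarrow> 'a \<Rightarrow> 'a) \<Rightarrow> 'a \<Rightarrow> 'a \<Rightarrow> 'a" where
  "bar_down X up down a b = (THE y. y \<in> X \<and> (\<exists>x\<in>X. down y x = a \<and> up x y = b))"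

definition generated :: "'a set \<Rightarrow> ('a \<Rightarrow> 'a \<Rightarrow> 'a) \<Rightarrow> ('a \<Rightarrow> 'a \<Rightarrow> 'a) \<Rightarrow> 'a set \<Rightarrow> 'a set" where
  "generated X up down A = \<Inter> {C. C \<subseteq> X \<and> A \<subseteq> C \<and>
      (\<forall>x\<in>C. \<forall>y\<in>C. up x y \<in> C \<and> down x y \<in> C \<and>
                     bar_up X up down x y \<in> C \<and> bar_down X up down x y \<in> C)}"

definition generating_set :: "'a set \<Rightarrow> ('a \<Rightarrow> 'a \<Rightarrow> 'a) \<Rightarrow> ('a \<Rightarrow> 'a \<Rightarrow> 'a) \<Rightarrow> 'a set \<Rightarrow> bool" where
  "generating_set X up down A \<longleftrightarrow> A \<subseteq> X \<and> generated X up down A = X"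

text \<open>Action of a word x1^e1 ... xk^ek (list of letters with signs; True = +1, False = -1):
  y op w = (...((y op_e1 x1) op_e2 x2) ...) op_ek xk.\<close>
definition word_act :: "('a \<Rightarrow> 'a \<Rightarrow> 'a) \<Rightarrow> ('a \<Rightarrow> 'a \<Rightarrow> 'a) \<Rightarrow> 'a \<Rightarrow> ('a \<times> bool) list \<Rightarrow> 'a" where
  "word_act op opbar y w = foldl (\<lambda>z (x, e). if e then op z x else opbar z x) y w"

end

theory Submission
  imports Defs "HOL-Homology.Invariance_of_Domain"
begin

(*
  The class of a pair (a0, a1) can be acted on by loops at the two base points: appending a loop
  at z0 to a0, or a loop at z1 to a1, is well defined on classes, the two actions commute, and
  homotopic loops act alike. In these terms x up y appends to x the meridian of y conjugated by its
  first path, the loop mu0(y) = rev(y0) . m . y0 at z0, and x down y appends the loop mu1(y) at z1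
  built from the second path; since these loops depend on y only up to homotopy, the inverse of
  S(x,y) = (y down x, x up y), and hence the bar operations, append the reversed loops. So
  (a up w1) down w2 is a with the products of the loops of the letters of w1 and w2 appended.
  For y = (b up u1) down u2 the loop mu0(y) is mu0(b) conjugated by the loop of u1 and mu1(y) is
  mu1(b) conjugated by the loop of u2, so acting with y on an element of this form gives an
  element of the same form, with a word extended by u^-1 b^(+-1) u. The elements of this form
  therefore contain everything generated by A.
  The meridian loops only stay in the link exterior because the boundary of the tubes lies in
  it, which is where invariance of domain enters.
*)

section \<open>Tubes and meridians\<close>

locale tubular_link =
  fixes n :: nat and phi :: "nat \<Rightarrow> complex \<Rightarrow> complex \<Rightarrow> real^4"
  assumes tubular: "tubular n phi"
begin

definition tube :: "nat \<Rightarrow> (real^4) set" where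
  "tube i = (\<lambda>(z,w). phi i z w) ` (sphere 0 1 \<times> cball 0 1)"

lemma continuous_on_tube_param:
  "i < n \<Longrightarrow> continuous_on (sphere 0 1 \<times> cball 0 1) (\<lambda>(z,w). phi i z w)"
  using tubular unfolding tubular_def by blast

lemma tube_param_inj:
  "\<lbrakk>i < n; j < n; z \<in> sphere 0 1; w \<in> cball 0 1; z' \<in> sphere 0 1; w' \<in> cball 0 1;
    phi i z w = phi j z' w'\<rbrakk> \<Longrightarrow> i = j \<and> z = z' \<and> w = w'"
  using tubular unfolding tubular_def by blast

lemma tube_memI: "z \<in> sphere 0 1 \<Longrightarrow> w \<in> cball 0 1 \<Longrightarrow> phi i z w \<in> tube i"
  unfolding tube_def by (auto intro!: image_eqI[where x="(z,w)"])

lemma closed_tube: "i < n \<Longrightarrow> closed (tube i)"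
  unfolding tube_def
  by (intro compact_imp_closed compact_continuous_image continuous_on_tube_param compact_Times
      compact_sphere compact_cball)

lemma nbhd_eq_Union_tube: "nbhd n phi = (\<Union>i<n. tube i)"
  unfolding nbhd_def tube_def by (fastforce simp: image_iff)

lemma bdry_subset_nbhd: "bdry n phi \<subseteq> nbhd n phi"
  unfolding bdry_def nbhd_def by fastforce

lemma disjoint_tubes:
  assumes "i < n" "j < n" "i \<noteq> j" shows "tube i \<inter> tube j = {}"
proof (rule equals0I)
  fix x assume "x \<in> tube i \<inter> tube j"
  then obtain z w z' w' where "z \<in> sphere 0 1" "w \<in> cball 0 1" "z' \<in> sphere 0 1" "w' \<in> cball 0 1"
      "x = phi i z w" "x = phi j z' w'" unfolding tube_def by auto
  then show False using tube_param_inj[of i j z w z' w'] assms by auto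
qed

lemma connected_subset_tube:
  assumes "connected S" "S \<subseteq> nbhd n phi" "x \<in> S" "x \<in> tube i" "i < n"
  shows "S \<subseteq> tube i"
proof -
  define B where "B = (\<Union>j\<in>{j. j < n \<and> j \<noteq> i}. tube j)"
  have "closed B" unfolding B_def by (intro closed_UN) (auto intro: closed_tube)
  moreover have "S \<subseteq> tube i \<union> B" using assms(2) unfolding nbhd_eq_Union_tube B_def by auto
  moreover have "tube i \<inter> B = {}" unfolding B_def using disjoint_tubes assms(5) by auto
  moreover have "tube i \<inter> S \<noteq> {}" using assms(3,4) by blast
  ultimately have "B \<inter> S = {}"
    using assms(1) closed_tube[OF assms(5)] unfolding connected_closed by blast
  then show ?thesis using \<open>S \<subseteq> tube i \<union> B\<close> by blast
qed

lemma homeomorphism_tube: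
  assumes "i < n"
  obtains g where "homeomorphism (sphere 0 1 \<times> cball 0 1) (tube i) (\<lambda>(z,w). phi i z w) g"
proof -
  have "inj_on (\<lambda>(z, w). phi i z w) (sphere 0 1 \<times> cball 0 1)"
    using tube_param_inj[OF assms assms] by (auto intro!: inj_onI)
  moreover have "compact (sphere (0::complex) 1 \<times> cball (0::complex) 1)"
    by (intro compact_Times compact_sphere compact_cball)
  ultimately show ?thesis
    using that homeomorphism_compact[OF _ continuous_on_tube_param[OF assms]] unfolding tube_def by blast
qed

lemma meridian_param:
  assumes "i < n" "z \<in> sphere 0 1" "w \<in> sphere 0 1"
  shows "meridian n phi (phi i z w) = (\<lambda>t. phi i z (w * cis (2 * pi * t)))"
proof -
  let ?P = "\<lambda>(j,z',w'). j < n \<and> z' \<in> sphere (0::complex) 1 \<and> w' \<in> sphere (0::complex) 1 \<and> phi j z' w' = phi i z w"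
  have "?P (i,z,w)" using assms by auto
  then have "?P (SOME x. ?P x)" by (rule someI)
  moreover obtain j z' w' where e: "(SOME x. ?P x) = (j,z',w')" by (cases "SOME x. ?P x") blast
  ultimately have "(SOME x. ?P x) = (i,z,w)"
    using tube_param_inj[of j i z' w' z w] assms by auto
  then show ?thesis unfolding meridian_def by simp
qed

lemma
  assumes "p \<in> bdry n phi"
  shows path_meridian: "path (meridian n phi p)"
    and path_image_meridian: "path_image (meridian n phi p) \<subseteq> bdry n phi"
    and pathstart_meridian: "pathstart (meridian n phi p) = p"
    and pathfinish_meridian: "pathfinish (meridian n phi p) = p"
proof -
  obtain i z w where j: "i < n" "z \<in> sphere 0 1" "w \<in> sphere 0 1" "p = phi i z w"
    using assms unfolding bdry_def by blast
  note m = meridian_param[OF j(1-3), folded j(4)]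
  have "continuous_on {0..1} ((\<lambda>(z,w). phi i z w) \<circ> (\<lambda>t::real. (z, w * cis (2 * pi * t))))"
    by (intro continuous_on_compose continuous_intros continuous_on_subset[OF continuous_on_tube_param[OF j(1)]])
       (use j in \<open>auto simp: norm_mult\<close>)
  then show "path (meridian n phi p)" unfolding m path_def by (simp add: o_def)
  show "path_image (meridian n phi p) \<subseteq> bdry n phi" unfolding m path_image_def bdry_def
    using j by (force simp: norm_mult)
  show "pathstart (meridian n phi p) = p" unfolding m pathstart_def using j by simp
  have "cis (2 * pi) = 1" by (simp add: complex_eq_iff)
  then show "pathfinish (meridian n phi p) = p" unfolding m pathfinish_def using j by simp
qed

lemma meridian_tube_inverse:
  assumes "i < n" and g: "homeomorphism (sphere 0 1 \<times> cball 0 1) (tube i) (\<lambda>(z,w). phi i z w) g"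
    and "p \<in> bdry n phi" "p \<in> tube i"
  shows "g p \<in> sphere 0 1 \<times> sphere 0 1 \<and>
    meridian n phi p = (\<lambda>s. phi i (fst (g p)) (snd (g p) * cis (2 * pi * s)))"
proof -
  obtain j z w where j: "j < n" "z \<in> sphere 0 1" "w \<in> sphere 0 1" "p = phi j z w"
    using assms(3) unfolding bdry_def by blast
  have "g p \<in> sphere 0 1 \<times> cball 0 1" using homeomorphism_image2[OF g] assms(4) by blast
  moreover have "(\<lambda>(z,w). phi i z w) (g p) = p" by (rule homeomorphism_apply2[OF g assms(4)])
  ultimately have "g p = (z, w) \<and> i = j"
    using tube_param_inj[of i j "fst (g p)" "snd (g p)" z w] assms(1) j by (cases "g p") auto
  then show ?thesis using j meridian_param[of j z w] by auto
qed

text \<open>Meridians vary continuously along a path in the boundary, because such a path stays in one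
  tube, where the meridian is read off the inverse of the tube parametrisation.\<close>

lemma continuous_on_meridian:
  fixes T :: "real set"
  assumes f: "continuous_on T f" "f ` T \<subseteq> bdry n phi" and "connected T"
  shows "continuous_on (T \<times> {0..1}) (\<lambda>y. meridian n phi (f (fst y)) (snd y))"
proof (cases "T = {}")
  case True
  then show ?thesis by simp
next
  case False
  then obtain t0 i z w where t0: "t0 \<in> T" "i < n" "z \<in> sphere 0 1" "w \<in> sphere 0 1" "f t0 = phi i z w"
    using f(2) unfolding bdry_def by blast
  then have fTi: "f ` T \<subseteq> tube i"
    using connected_subset_tube[OF connected_continuous_image[OF f(1) \<open>connected T\<close>]] f(2)
      bdry_subset_nbhd tube_memI[of z w i] by fastforce
  obtain g where g: "homeomorphism (sphere 0 1 \<times> cball 0 1) (tube i) (\<lambda>(z,w). phi i z w) g"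
    using homeomorphism_tube[OF t0(2)] by blast
  have key: "g (f t) \<in> sphere 0 1 \<times> sphere 0 1 \<and>
      meridian n phi (f t) = (\<lambda>s. phi i (fst (g (f t))) (snd (g (f t)) * cis (2 * pi * s)))"
    if "t \<in> T" for t
    using meridian_tube_inverse[OF t0(2) g] f(2) fTi that by blast
  have "continuous_on (T \<times> {0..1}) ((\<lambda>(z,w). phi i z w) \<circ>
          (\<lambda>y. (fst (g (f (fst y))), snd (g (f (fst y))) * cis (2 * pi * snd y))))"
  proof (rule continuous_on_compose)
    have "continuous_on (T \<times> {0..1}) (\<lambda>y. g (f (fst y)))"
      by (rule continuous_on_compose2[OF homeomorphism_cont2[OF g] continuous_on_compose2[OF f(1) continuous_on_fst]])
         (use fTi in auto)
    then show "continuous_on (T \<times> {0..1})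
        (\<lambda>y. (fst (g (f (fst y))), snd (g (f (fst y))) * cis (2 * pi * snd y)))"
      by (intro continuous_intros)
    show "continuous_on ((\<lambda>y. (fst (g (f (fst y))), snd (g (f (fst y))) * cis (2 * pi * snd y))) ` (T \<times> {0..1}))
       (\<lambda>(z,w). phi i z w)"
    proof (rule continuous_on_subset[OF continuous_on_tube_param[OF t0(2)]], rule image_subsetI)
      fix y :: "real \<times> real" assume "y \<in> T \<times> {0..1}"
      then have "g (f (fst y)) \<in> sphere 0 1 \<times> sphere 0 1" using key by auto
      then show "(fst (g (f (fst y))), snd (g (f (fst y))) * cis (2 * pi * snd y)) \<in> sphere 0 1 \<times> cball 0 1"
        by (cases "g (f (fst y))") (simp add: norm_mult)
    qed
  qed
  then show ?thesis
  proof (rule continuous_on_eq)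
    fix y :: "real \<times> real" assume "y \<in> T \<times> {0..1}"
    then show "((\<lambda>(z,w). phi i z w) \<circ> (\<lambda>y. (fst (g (f (fst y))), snd (g (f (fst y))) * cis (2 * pi * snd y)))) y
        = meridian n phi (f (fst y)) (snd y)"
      using key[of "fst y"] by (simp add: mem_Times_iff)
  qed
qed

end

section \<open>The boundary of the tubes lies in the link exterior\<close>

text \<open>An embedding of the solid torus, thickened beyond the unit disk, into
  \<open>\<real>\<^sup>3 = \<complex> \<times> \<real>\<close>.\<close>

definition torus_coords :: "complex \<times> complex \<Rightarrow> complex \<times> real" where
  "torus_coords = (\<lambda>(z,w). ((2 + Re w) *\<^sub>R z, Im w))"

lemma continuous_on_torus_coords: "continuous_on S torus_coords"
  unfolding torus_coords_def case_prod_beta by (intro continuous_intros)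

lemma torus_coords_inj:
  assumes "cmod z = 1" "cmod z' = 1" "Re w > -2" "Re w' > -2"
    and "torus_coords (z,w) = torus_coords (z',w')"
  shows "z = z' \<and> w = w'"
proof -
  have e1: "(2 + Re w) *\<^sub>R z = (2 + Re w') *\<^sub>R z'" and e2: "Im w = Im w'"
    using assms(5) by (auto simp: torus_coords_def)
  have "norm ((2 + Re w) *\<^sub>R z) = norm ((2 + Re w') *\<^sub>R z')" using e1 by simp
  then have "Re w = Re w'" using assms(1-4) by simp
  then show ?thesis using e1 e2 assms(3) complex_eqI by auto
qed

lemma torus_coords_inj_on: "inj_on torus_coords (sphere 0 1 \<times> cball 0 1)"
proof (rule inj_onI)
  fix x y assume "x \<in> sphere 0 1 \<times> cball 0 1" "y \<in> sphere 0 1 \<times> cball 0 1"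
    "torus_coords x = torus_coords y"
  then show "x = y"
    using torus_coords_inj[of "fst x" "fst y" "snd x" "snd y"]
      abs_Re_le_cmod[of "snd x"] abs_Re_le_cmod[of "snd y"] by (cases x, cases y) auto
qed

text \<open>Pushing a boundary point radially out of the disk leaves the image of the solid torus.\<close>

lemma torus_coords_boundary_not_interior:
  assumes "cmod z = 1" "cmod w = 1" "e > 0"
  shows "\<not> ball (torus_coords (z,w)) e \<subseteq> torus_coords ` (sphere 0 1 \<times> cball 0 1)"
proof
  assume sub: "ball (torus_coords (z,w)) e \<subseteq> torus_coords ` (sphere 0 1 \<times> cball 0 1)"
  define d where "d = min (e / 3) (1/2)"
  have d: "d > 0" "d < e / 2" "d \<le> 1/2" using assms(3) by (auto simp: d_def)
  define w' where "w' = complex_of_real (1 + d) * w"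
  have "cmod w' = \<bar>1 + d\<bar> * cmod w" by (simp only: w'_def norm_mult norm_of_real)
  then have "cmod w' = 1 + d" using assms(2) d by simp
  have "torus_coords (z,w') - torus_coords (z,w) = ((d * Re w) *\<^sub>R z, d * Im w)"
    unfolding torus_coords_def w'_def by (simp add: algebra_simps scaleR_diff_left)
  then have "dist (torus_coords (z,w')) (torus_coords (z,w)) = norm ((d * Re w) *\<^sub>R z, d * Im w)"
    by (simp add: dist_norm)
  also have "\<dots> \<le> norm ((d * Re w) *\<^sub>R z) + norm (d * Im w)" by (rule norm_Pair_le)
  also have "\<dots> \<le> d + d"
    using assms(1,2) d abs_Re_le_cmod[of w] abs_Im_le_cmod[of w]
    by (intro add_mono) (simp_all add: abs_mult mult_left_le)
  finally have "torus_coords (z,w') \<in> ball (torus_coords (z,w)) e"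
    using d by (simp add: dist_commute)
  then obtain a b where ab: "cmod a = 1" "cmod b \<le> 1" "torus_coords (z,w') = torus_coords (a,b)"
    using sub by fastforce
  have "Re b > -2" "Re w' > -2"
    using ab(2) \<open>cmod w' = 1 + d\<close> d abs_Re_le_cmod[of b] abs_Re_le_cmod[of w'] by linarith+
  then have "w' = b" using torus_coords_inj[OF assms(1) ab(1) _ _ ab(3)] by simp
  then show False using ab(2) \<open>cmod w' = 1 + d\<close> d by simp
qed

lemma ball_image_subset_if_not_in_closure:
  assumes "continuous_on U h" "open U" "h ` U \<subseteq> S" "q \<in> U" "h q \<notin> closure (S - N)"
  obtains d where "d > 0" "ball q d \<subseteq> U" "h ` ball q d \<subseteq> N"
proof -
  let ?V = "U \<inter> h -` (- closure (S - N))"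
  have "open ?V" by (intro continuous_open_preimage assms(1,2) open_Compl closed_closure)
  moreover have "q \<in> ?V" using assms(4,5) by simp
  ultimately obtain d where d: "d > 0" "ball q d \<subseteq> ?V" by (rule openE)
  have "h ` ?V \<subseteq> N"
  proof (rule image_subsetI)
    fix x assume x: "x \<in> ?V"
    then have "h x \<in> S" using assms(3) by (simp add: image_subset_iff)
    moreover have "h x \<notin> S - N" using x closure_subset[of "S - N"] by auto
    ultimately show "h x \<in> N" by simp
  qed
  then have "h ` ball q d \<subseteq> N" using image_mono[OF d(2)] by (rule order_trans[rotated])
  with d show ?thesis using that by blast
qed

context tubular_link
begin

text \<open>Invariance of domain: an injective continuous image of a ball in \<open>\<real>\<^sup>3\<close> is open, so
  it cannot be contained in a solid torus while hitting its boundary.\<close>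

lemma ball_image_in_tube_avoids_bdry:
  fixes h :: "real^3 \<Rightarrow> real^4"
  assumes i: "i < n" "z \<in> sphere 0 1" "w \<in> sphere 0 1" and "d > 0"
    and h: "continuous_on (ball q d) h" "inj_on h (ball q d)" "h ` ball q d \<subseteq> tube i"
    and "h q = phi i z w"
  shows False
proof -
  obtain g where g: "homeomorphism (sphere 0 1 \<times> cball 0 1) (tube i) (\<lambda>(z,w). phi i z w) g"
    using homeomorphism_tube[OF i(1)] by blast
  have g_into: "g ` h ` ball q d \<subseteq> sphere 0 1 \<times> cball 0 1"
    using image_mono[OF h(3), of g] homeomorphism_image2[OF g] by simp
  define G where "G = torus_coords \<circ> g \<circ> h"
  have "continuous_on (ball q d) G"
    unfolding G_def by (intro continuous_on_compose h(1) continuous_on_subset[OF homeomorphism_cont2[OF g] h(3)]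
        continuous_on_torus_coords)
  moreover have "inj_on G (ball q d)"
  proof (rule inj_onI)
    fix x y assume xy: "x \<in> ball q d" "y \<in> ball q d" "G x = G y"
    have "torus_coords (g (h x)) = torus_coords (g (h y))" using xy(3) by (simp add: G_def)
    moreover have "g (h x) \<in> sphere 0 1 \<times> cball 0 1" "g (h y) \<in> sphere 0 1 \<times> cball 0 1"
      using g_into xy(1,2) by blast+
    ultimately have "g (h x) = g (h y)" by (rule inj_onD[OF torus_coords_inj_on])
    moreover have "h x \<in> tube i" "h y \<in> tube i" using h(3) xy(1,2) by blast+
    ultimately have "h x = h y" by (metis homeomorphism_apply2[OF g])
    then show "x = y" using inj_onD[OF h(2)] xy(1,2) by blast
  qed
  ultimately have "open (G ` ball q d)"
    by (rule invariance_of_domain_gen[OF open_ball]) simp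
  moreover have "G q \<in> G ` ball q d" using \<open>d > 0\<close> by simp
  ultimately obtain e where e: "e > 0" "ball (G q) e \<subseteq> G ` ball q d" by (rule openE)
  have "G q = torus_coords (z, w)"
    using homeomorphism_apply1[OF g, of "(z, w)"] i \<open>h q = phi i z w\<close> by (simp add: G_def)
  moreover have "G ` ball q d \<subseteq> torus_coords ` (sphere 0 1 \<times> cball 0 1)"
    using image_mono[OF g_into, of torus_coords] by (simp add: G_def image_comp)
  ultimately show False
    using torus_coords_boundary_not_interior[of z w e] i(2,3) e by auto
qed

lemma bdry_subset_ext:
  fixes h :: "real^3 \<Rightarrow> real^4" and h' :: "real^4 \<Rightarrow> real^3"
  assumes ball: "homeomorphism (cball 0 1) (h ` cball 0 1) h h'"
    and ballS3: "h ` cball 0 1 \<subseteq> S3"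
    and nbhd_in: "nbhd n phi \<subseteq> h ` ball 0 1"
  shows "bdry n phi \<subseteq> ext n phi"
proof
  fix P assume "P \<in> bdry n phi"
  then obtain i z w where i: "i < n" "z \<in> sphere 0 1" "w \<in> sphere 0 1" "P = phi i z w"
    unfolding bdry_def by blast
  have "P \<in> nbhd n phi" using \<open>P \<in> bdry n phi\<close> bdry_subset_nbhd by blast
  then obtain q where q: "q \<in> ball 0 1" "P = h q" using nbhd_in by blast
  have ch: "continuous_on (ball 0 1) h"
    by (rule continuous_on_subset[OF homeomorphism_cont1[OF ball] ball_subset_cball])
  have hS3: "h ` ball 0 1 \<subseteq> S3" by (rule order_trans[OF image_mono[OF ball_subset_cball] ballS3])
  show "P \<in> ext n phi" unfolding ext_def
  proof (rule ccontr)
    assume "P \<notin> closure (S3 - nbhd n phi)"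
    then have "h q \<notin> closure (S3 - nbhd n phi)" using q(2) by simp
    then obtain d where d: "d > 0" "ball q d \<subseteq> ball 0 1" "h ` ball q d \<subseteq> nbhd n phi"
      by (rule ball_image_subset_if_not_in_closure[OF ch open_ball hS3 q(1)])
    have chd: "continuous_on (ball q d) h" by (rule continuous_on_subset[OF ch d(2)])
    have "h ` ball q d \<subseteq> tube i"
    proof (rule connected_subset_tube[OF _ d(3) _ _ i(1)])
      show "connected (h ` ball q d)" by (rule connected_continuous_image[OF chd connected_ball])
      show "P \<in> h ` ball q d" using q(2) d(1) by simp
      show "P \<in> tube i" using i tube_memI by simp
    qed
    moreover have "inj_on h (cball 0 1)" by (meson homeomorphism_apply1[OF ball] inj_on_inverseI)
    then have "inj_on h (ball q d)" using d(2) ball_subset_cball by (blast intro: inj_on_subset)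
    ultimately show False
      using ball_image_in_tube_avoids_bdry[OF i(1-3) d(1) chd] i(4) q(2) by simp
  qed
qed
end

lemma homeomorphic_ball_sphere_in_ext:
  fixes h :: "real^3 \<Rightarrow> real^4" and h' :: "real^4 \<Rightarrow> real^3"
  assumes "homeomorphism (cball 0 1) (h ` cball 0 1) h h'" "h ` cball 0 1 \<subseteq> S3"
    "nbhd n phi \<subseteq> h ` ball 0 1" "norm u = 1"
  shows "h u \<in> ext n phi"
proof -
  have "h u \<notin> nbhd n phi"
  proof
    assume "h u \<in> nbhd n phi"
    then obtain q where "q \<in> ball 0 1" "h u = h q" using assms(3) by blast
    moreover have "u \<in> cball 0 1" "q \<in> cball 0 1" using \<open>q \<in> ball 0 1\<close> assms(4) by auto
    ultimately have "u = q" by (metis homeomorphism_apply1[OF assms(1)])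
    then show False using \<open>q \<in> ball 0 1\<close> assms(4) by simp
  qed
  moreover have "h u \<in> S3" using assms(2,4) by (simp add: image_subset_iff)
  ultimately show ?thesis unfolding ext_def by (intro subsetD[OF closure_subset] DiffI)
qed

section \<open>Loops and words of loops\<close>

definition loop_in :: "'a::topological_space set \<Rightarrow> 'a \<Rightarrow> (real \<Rightarrow> 'a) \<Rightarrow> bool" where
  "loop_in S z l \<longleftrightarrow> path l \<and> path_image l \<subseteq> S \<and> pathstart l = z \<and> pathfinish l = z"

lemma loop_in_joinpaths: "loop_in S z p \<Longrightarrow> loop_in S z q \<Longrightarrow> loop_in S z (p +++ q)"
  unfolding loop_in_def by (auto simp: path_image_join)

lemma loop_in_reversepath: "loop_in S z p \<Longrightarrow> loop_in S z (reversepath p)"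
  unfolding loop_in_def by auto

lemma loop_in_linepath: "z \<in> S \<Longrightarrow> loop_in S z (linepath z z)"
  unfolding loop_in_def by auto

lemma loop_in_homotopic: "homotopic_paths S p q \<Longrightarrow> loop_in S z p \<Longrightarrow> loop_in S z q"
  unfolding loop_in_def using homotopic_paths_imp_path homotopic_paths_imp_subset
    homotopic_paths_imp_pathstart homotopic_paths_imp_pathfinish by metis

lemma homotopic_paths_refl_loop: "loop_in S z p \<Longrightarrow> homotopic_paths S p p"
  unfolding loop_in_def by simp

lemma homotopic_paths_assoc_loop:
  "loop_in S z p \<Longrightarrow> loop_in S z q \<Longrightarrow> loop_in S z r \<Longrightarrow>
    homotopic_paths S (p +++ (q +++ r)) ((p +++ q) +++ r)"
  unfolding loop_in_def by (intro homotopic_paths_assoc) auto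

lemma homotopic_paths_join_loop:
  "homotopic_paths S p p' \<Longrightarrow> homotopic_paths S q q' \<Longrightarrow> loop_in S z p \<Longrightarrow> loop_in S z q \<Longrightarrow>
    homotopic_paths S (p +++ q) (p' +++ q')"
  unfolding loop_in_def by (intro homotopic_paths_join) auto

lemma homotopic_paths_rid_loop: "loop_in S z p \<Longrightarrow> homotopic_paths S (p +++ linepath z z) p"
  unfolding loop_in_def using homotopic_paths_rid by fastforce

lemma homotopic_paths_lid_loop: "loop_in S z p \<Longrightarrow> homotopic_paths S (linepath z z +++ p) p"
  unfolding loop_in_def using homotopic_paths_lid by fastforce

lemma homotopic_paths_linv_loop:
  "loop_in S z p \<Longrightarrow> homotopic_paths S (reversepath p +++ p) (linepath z z)"
  unfolding loop_in_def using homotopic_paths_linv by fastforce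

lemma homotopic_paths_rinv_loop:
  "loop_in S z p \<Longrightarrow> homotopic_paths S (p +++ reversepath p) (linepath z z)"
  unfolding loop_in_def using homotopic_paths_rinv by fastforce

lemma reversepath_conjugate:
  assumes "pathstart p = pathstart q" "pathfinish q = pathstart r"
  shows "reversepath (reversepath p +++ (q +++ r)) = (reversepath r +++ reversepath q) +++ p"
  using assms by (simp add: reversepath_joinpaths)

lemma homotopic_paths_reversepath_conjugate:
  assumes "loop_in S z p" "loop_in S z q" "homotopic_paths S l (reversepath p +++ (q +++ p))"
  shows "homotopic_paths S (reversepath l) (reversepath p +++ (reversepath q +++ p))"
proof -
  have "homotopic_paths S (reversepath l) (reversepath (reversepath p +++ (q +++ p)))"
    using assms(3) by (simp add: homotopic_paths_reversepath)
  also have "reversepath (reversepath p +++ (q +++ p)) = (reversepath p +++ reversepath q) +++ p"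
    by (rule reversepath_conjugate) (use assms(1,2) in \<open>simp_all add: loop_in_def\<close>)
  also have "homotopic_paths S \<dots> (reversepath p +++ (reversepath q +++ p))"
    by (rule homotopic_paths_sym[OF homotopic_paths_assoc_loop])
       (use assms(1,2) in \<open>simp_all add: loop_in_reversepath\<close>)
  finally show ?thesis .
qed

text \<open>A word in letters \<open>c\<close> carrying loops \<open>g c\<close> is read as the product of the loops of its
  letters, each reversed where its exponent is \<open>-1\<close> (encoded as \<open>False\<close>).\<close>

definition signed_loop :: "('c \<Rightarrow> real \<Rightarrow> 'a::topological_space) \<Rightarrow> 'c \<Rightarrow> bool \<Rightarrow> real \<Rightarrow> 'a" where
  "signed_loop g c e = (if e then g c else reversepath (g c))"

definition word_loop :: "'a::real_normed_vector \<Rightarrow> ('c \<Rightarrow> real \<Rightarrow> 'a) \<Rightarrow> ('c \<times> bool) list \<Rightarrow> real \<Rightarrow> 'a" where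
  "word_loop z g w = foldr (\<lambda>(c,e) p. signed_loop g c e +++ p) w (linepath z z)"

lemma word_loop_Nil [simp]: "word_loop z g [] = linepath z z"
  by (simp add: word_loop_def)

lemma word_loop_Cons [simp]: "word_loop z g ((c,e) # w) = signed_loop g c e +++ word_loop z g w"
  by (simp add: word_loop_def)

definition word_inverse :: "('c \<times> bool) list \<Rightarrow> ('c \<times> bool) list" where
  "word_inverse u = rev (map (\<lambda>(c,e). (c, \<not> e)) u)"

lemma word_inverse_Nil [simp]: "word_inverse [] = []"
  by (simp add: word_inverse_def)

lemma word_inverse_Cons [simp]: "word_inverse ((c,e) # u) = word_inverse u @ [(c, \<not> e)]"
  by (simp add: word_inverse_def)

lemma letters_word_inverse [simp]: "fst ` set (word_inverse u) = fst ` set u"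
  by (force simp: word_inverse_def)

locale loop_family =
  fixes S :: "'a::real_normed_vector set" and z :: 'a and g :: "'c \<Rightarrow> real \<Rightarrow> 'a" and C :: "'c set"
  assumes base_in: "z \<in> S" and loop_in_family: "c \<in> C \<Longrightarrow> loop_in S z (g c)"
begin

lemma loop_in_signed_loop: "c \<in> C \<Longrightarrow> loop_in S z (signed_loop g c e)"
  unfolding signed_loop_def using loop_in_family loop_in_reversepath by auto

lemma loop_in_word_loop: "set (map fst w) \<subseteq> C \<Longrightarrow> loop_in S z (word_loop z g w)"
  by (induction w) (auto intro!: loop_in_joinpaths loop_in_signed_loop loop_in_linepath base_in)

lemma homotopic_word_loop_append:
  assumes "set (map fst u) \<subseteq> C" "set (map fst v) \<subseteq> C"
  shows "homotopic_paths S (word_loop z g (u @ v)) (word_loop z g u +++ word_loop z g v)"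
  using assms(1)
proof (induction u)
  case Nil
  then show ?case
    using homotopic_paths_sym[OF homotopic_paths_lid_loop[OF loop_in_word_loop[OF assms(2)]]]
    by (simp only: append_Nil word_loop_Nil)
next
  case (Cons x u)
  obtain c e where x: "x = (c,e)" by fastforce
  have c: "c \<in> C" and u: "set (map fst u) \<subseteq> C" using Cons.prems x by auto
  note loops = loop_in_signed_loop[OF c, of e] loop_in_word_loop[OF u] loop_in_word_loop[OF assms(2)]
  have "homotopic_paths S (signed_loop g c e +++ word_loop z g (u @ v))
      (signed_loop g c e +++ (word_loop z g u +++ word_loop z g v))"
    using u assms(2)
    by (intro homotopic_paths_join_loop[OF homotopic_paths_refl_loop[OF loops(1)] Cons.IH[OF u] loops(1)]
        loop_in_word_loop) simp
  also have "homotopic_paths S \<dots> ((signed_loop g c e +++ word_loop z g u) +++ word_loop z g v)"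
    by (rule homotopic_paths_assoc_loop[OF loops])
  finally show ?case by (simp add: x)
qed

lemma homotopic_word_loop_inverse:
  assumes "set (map fst u) \<subseteq> C"
  shows "homotopic_paths S (word_loop z g (word_inverse u)) (reversepath (word_loop z g u))"
  using assms
proof (induction u)
  case Nil
  show ?case using homotopic_paths_refl_loop[OF loop_in_linepath[OF base_in]]
    by (simp only: word_inverse_Nil word_loop_Nil reversepath_linepath)
next
  case (Cons x u)
  obtain c e where x: "x = (c,e)" by fastforce
  have c: "c \<in> C" and u: "set (map fst u) \<subseteq> C" using Cons.prems x by auto
  have u': "set (map fst (word_inverse u)) \<subseteq> C" using u by simp
  have "homotopic_paths S (word_loop z g (word_inverse u @ [(c, \<not> e)]))
      (word_loop z g (word_inverse u) +++ word_loop z g [(c, \<not> e)])"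
    by (rule homotopic_word_loop_append[OF u']) (use c in simp)
  also have "homotopic_paths S \<dots> (reversepath (word_loop z g u) +++ signed_loop g c (\<not> e))"
    using loop_in_signed_loop[OF c] loop_in_linepath[OF base_in]
    by (auto intro!: homotopic_paths_join_loop Cons.IH[OF u] homotopic_paths_rid_loop
        loop_in_word_loop[OF u'] loop_in_joinpaths)
  also have "reversepath (word_loop z g u) +++ signed_loop g c (\<not> e)
      = reversepath (signed_loop g c e +++ word_loop z g u)"
    using loop_in_signed_loop[OF c, of e] loop_in_word_loop[OF u]
    by (simp add: reversepath_joinpaths signed_loop_def loop_in_def)
  finally show ?case by (simp add: x)
qed

lemma homotopic_word_loop_conjugate:
  assumes "set (map fst w) \<subseteq> C" "set (map fst u) \<subseteq> C" "b \<in> C"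
  shows "homotopic_paths S (word_loop z g (w @ word_inverse u @ [(b,e)] @ u))
    (word_loop z g w +++ (reversepath (word_loop z g u) +++ (signed_loop g b e +++ word_loop z g u)))"
proof -
  have bu: "set (map fst ([(b,e)] @ u)) \<subseteq> C" and iu: "set (map fst (word_inverse u)) \<subseteq> C"
    using assms by auto
  then have ibu: "set (map fst (word_inverse u @ [(b,e)] @ u)) \<subseteq> C" by simp
  note loops = loop_in_word_loop[OF assms(1)] loop_in_word_loop[OF iu] loop_in_word_loop[OF ibu]
    loop_in_joinpaths[OF loop_in_signed_loop[OF assms(3)] loop_in_word_loop[OF assms(2)]]
  have "homotopic_paths S (word_loop z g (word_inverse u @ [(b,e)] @ u))
      (word_loop z g (word_inverse u) +++ word_loop z g ([(b,e)] @ u))"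
    by (rule homotopic_word_loop_append[OF iu bu])
  also have "homotopic_paths S \<dots> (reversepath (word_loop z g u) +++ (signed_loop g b e +++ word_loop z g u))"
    using loops by (auto intro!: homotopic_paths_join_loop homotopic_word_loop_inverse assms(2)
        homotopic_paths_refl_loop)
  finally have "homotopic_paths S (word_loop z g (word_inverse u @ [(b,e)] @ u))
      (reversepath (word_loop z g u) +++ (signed_loop g b e +++ word_loop z g u))" .
  then have "homotopic_paths S (word_loop z g w +++ word_loop z g (word_inverse u @ [(b,e)] @ u))
      (word_loop z g w +++ (reversepath (word_loop z g u) +++ (signed_loop g b e +++ word_loop z g u)))"
    using loops by (intro homotopic_paths_join_loop homotopic_paths_refl_loop)
  with homotopic_word_loop_append[OF assms(1) ibu] show ?thesis
    by (rule homotopic_paths_trans)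
qed

end

section \<open>The equivalence of pairs of paths\<close>

abbreviation unit_square :: "(real \<times> real) set" where
  "unit_square \<equiv> {0..1} \<times> {0..1}"

lemma joinpaths_cong_on:
  assumes "\<And>t. t \<in> {0..1} \<Longrightarrow> p t = p' t" "\<And>t. t \<in> {0..1} \<Longrightarrow> q t = q' t" "s \<in> {0..(1::real)}"
  shows "(p +++ q) s = (p' +++ q') s"
  using assms(1)[of "2 * s"] assms(2)[of "2 * s - 1"] assms(3) by (simp add: joinpaths_def)

lemma joinpaths_in:
  assumes "\<And>t. t \<in> {0..1} \<Longrightarrow> p t \<in> S" "\<And>t. t \<in> {0..1} \<Longrightarrow> q t \<in> S" "s \<in> {0..(1::real)}"
  shows "(p +++ q) s \<in> S"
  using assms(1)[of "2 * s"] assms(2)[of "2 * s - 1"] assms(3) by (simp add: joinpaths_def)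

lemma joinpaths_half_left: "t \<in> {0..1} \<Longrightarrow> (p +++ q) (t/2) = p (t::real)"
  by (simp add: joinpaths_def)

lemma joinpaths_half_right:
  "t \<in> {0..1} \<Longrightarrow> pathfinish p = pathstart q \<Longrightarrow> (p +++ q) ((t+1)/2) = q (t::real)"
  by (cases "t = 0") (auto simp: joinpaths_def pathfinish_def pathstart_def field_simps)

lemma continuous_on_square_reparam:
  assumes "continuous_on unit_square H" "continuous_on {0..1} f" "f ` {0..1} \<subseteq> {0..1}"
  shows "continuous_on unit_square (\<lambda>y. H (fst y, f (snd y)))"
  by (rule continuous_on_compose2[OF assms(1)])
     (use assms(3) in \<open>auto intro!: continuous_intros continuous_on_compose2[OF assms(2)] simp: mem_Times_iff\<close>)

lemma continuous_on_path_snd: "path p \<Longrightarrow> continuous_on unit_square (\<lambda>y. p (snd y))"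
  unfolding path_def by (rule continuous_on_compose2[of "{0..1}" p _ snd]) (auto intro: continuous_on_snd)

lemma bpairsD:
  assumes "a \<in> bpairs n phi z0 z1"
  shows "path (fst a)" "path (snd a)" "path_image (fst a) \<subseteq> ext n phi" "path_image (snd a) \<subseteq> ext n phi"
    "pathstart (fst a) \<in> bdry n phi" "pathstart (snd a) = pathstart (fst a)" "pathfinish (fst a) = z0"
    "pathfinish (snd a) = z1"
  using assms unfolding bpairs_def by auto

lemma swap_in_bpairs_iff [simp]: "prod.swap a \<in> bpairs n phi z1 z0 \<longleftrightarrow> a \<in> bpairs n phi z0 z1"
  unfolding bpairs_def by (cases a) auto

lemma append_loop_fst_in_bpairs:
  assumes "a \<in> bpairs n phi z0 z1" "loop_in (ext n phi) z0 l"
  shows "(fst a +++ l, snd a) \<in> bpairs n phi z0 z1"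
  using bpairsD[OF assms(1)] assms(2) path_image_join_subset[of "fst a" l]
  unfolding bpairs_def loop_in_def by auto

lemma append_loop_snd_in_bpairs:
  assumes "a \<in> bpairs n phi z0 z1" "loop_in (ext n phi) z1 l"
  shows "(fst a, snd a +++ l) \<in> bpairs n phi z0 z1"
  using bpairsD[OF assms(1)] assms(2) path_image_join_subset[of "snd a" l]
  unfolding bpairs_def loop_in_def by auto

lemma bequivE:
  assumes "bequiv n phi z0 z1 a b"
  obtains H where "continuous_on unit_square H" "H ` unit_square \<subseteq> ext n phi"
    "\<And>s. s \<in> {0..1} \<Longrightarrow> H (0, s) = (reversepath (fst a) +++ snd a) s"
    "\<And>s. s \<in> {0..1} \<Longrightarrow> H (1, s) = (reversepath (fst b) +++ snd b) s"
    "\<And>t. t \<in> {0..1} \<Longrightarrow> H (t, 0) = z0 \<and> H (t, 1) = z1 \<and> H (t, 1/2) \<in> bdry n phi"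
  using assms unfolding bequiv_def by blast

text \<open>The homotopy of \<open>a\<^sub>0\<^sup>-\<^sup>1 \<cdot> a\<^sub>1\<close> assembled from separate homotopies of its two halves,
  which meet on the boundary.\<close>

lemma bequivI_join:
  assumes "continuous_on unit_square Ka" "continuous_on unit_square Kb"
    "Ka ` unit_square \<subseteq> ext n phi" "Kb ` unit_square \<subseteq> ext n phi"
    and ends: "\<And>t. t \<in> {0..1} \<Longrightarrow>
      Ka (t,0) = z0 \<and> Kb (t,1) = z1 \<and> Ka (t,1) = Kb (t,0) \<and> Ka (t,1) \<in> bdry n phi"
    and start: "\<And>s. s \<in> {0..1} \<Longrightarrow> Ka (0,s) = reversepath (fst a) s \<and> Kb (0,s) = snd a s"
    and finish: "\<And>s. s \<in> {0..1} \<Longrightarrow> Ka (1,s) = reversepath (fst b) s \<and> Kb (1,s) = snd b s"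
  shows "bequiv n phi z0 z1 a b"
  unfolding bequiv_def
proof (intro exI conjI ballI)
  let ?H = "\<lambda>y. ((\<lambda>s. Ka (fst y, s)) +++ (\<lambda>s. Kb (fst y, s))) (snd y)"
  show "continuous_on unit_square ?H"
    by (rule continuous_on_homotopic_join_lemma)
       (use assms(1,2) ends in \<open>auto simp: pathstart_def pathfinish_def\<close>)
  show "?H ` unit_square \<subseteq> ext n phi"
    using assms(3,4) by (auto intro!: joinpaths_in simp: image_subset_iff)
  fix s :: real assume s: "s \<in> {0..1}"
  show "?H (0, s) = (reversepath (fst a) +++ snd a) s" "?H (1, s) = (reversepath (fst b) +++ snd b) s"
    using start finish by (auto intro: joinpaths_cong_on[OF _ _ s])
  show "?H (s, 0) = z0" "?H (s, 1) = z1" using ends[OF s] by (simp_all add: joinpaths_def)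
  have "?H (s, 1/2) = Ka (s, 1)" by (simp add: joinpaths_def)
  then show "?H (s, 1/2) \<in> bdry n phi" using ends[OF s] by metis
qed

lemma bequiv_refl:
  assumes "a \<in> bpairs n phi z0 z1" shows "bequiv n phi z0 z1 a a"
proof (rule bequivI_join[where Ka="\<lambda>y. reversepath (fst a) (snd y)" and Kb="\<lambda>y. snd a (snd y)"])
  note a = bpairsD[OF assms]
  show "continuous_on unit_square (\<lambda>y. reversepath (fst a) (snd y))"
    "continuous_on unit_square (\<lambda>y. snd a (snd y))"
    using a(1,2) by (simp_all add: continuous_on_path_snd)
  show "(\<lambda>y. reversepath (fst a) (snd y)) ` unit_square \<subseteq> ext n phi"
    "(\<lambda>y. snd a (snd y)) ` unit_square \<subseteq> ext n phi"
    using a(3,4) by (auto simp: path_image_def reversepath_def)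
qed (use bpairsD[OF assms] in \<open>auto simp: reversepath_def pathstart_def pathfinish_def\<close>)

lemma bequiv_sym: "bequiv n phi z0 z1 a b \<Longrightarrow> bequiv n phi z0 z1 b a"
proof -
  assume "bequiv n phi z0 z1 a b"
  then obtain H where H: "continuous_on unit_square H" "H ` unit_square \<subseteq> ext n phi"
    "\<forall>s\<in>{0..1}. H (0, s) = (reversepath (fst a) +++ snd a) s \<and> H (1, s) = (reversepath (fst b) +++ snd b) s"
    "\<forall>t\<in>{0..1}. H (t, 0) = z0 \<and> H (t, 1) = z1 \<and> H (t, 1/2) \<in> bdry n phi"
    unfolding bequiv_def by blast
  have "continuous_on unit_square (\<lambda>y. H (1 - fst y, snd y))"
    by (rule continuous_on_compose2[OF H(1)]) (auto intro!: continuous_intros)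
  moreover have "(\<lambda>y. H (1 - fst y, snd y)) ` unit_square \<subseteq> ext n phi"
    using H(2) by (auto simp: image_subset_iff)
  ultimately show ?thesis unfolding bequiv_def using H(3,4)
    by (intro exI[of _ "\<lambda>y. H (1 - fst y, snd y)"]) auto
qed

lemma bequiv_trans:
  assumes "bequiv n phi z0 z1 a b" "bequiv n phi z0 z1 b c"
  shows "bequiv n phi z0 z1 a c"
proof -
  obtain H where H: "continuous_on unit_square H" "H ` unit_square \<subseteq> ext n phi"
    "\<forall>s\<in>{0..1}. H (0, s) = (reversepath (fst a) +++ snd a) s \<and> H (1, s) = (reversepath (fst b) +++ snd b) s"
    "\<forall>t\<in>{0..1}. H (t, 0) = z0 \<and> H (t, 1) = z1 \<and> H (t, 1/2) \<in> bdry n phi"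
    using assms(1) unfolding bequiv_def by blast
  obtain H' where H': "continuous_on unit_square H'" "H' ` unit_square \<subseteq> ext n phi"
    "\<forall>s\<in>{0..1}. H' (0, s) = (reversepath (fst b) +++ snd b) s \<and> H' (1, s) = (reversepath (fst c) +++ snd c) s"
    "\<forall>t\<in>{0..1}. H' (t, 0) = z0 \<and> H' (t, 1) = z1 \<and> H' (t, 1/2) \<in> bdry n phi"
    using assms(2) unfolding bequiv_def by blast
  let ?H = "\<lambda>y. if fst y \<le> 1/2 then H (2 * fst y, snd y) else H' (2 * fst y - 1, snd y)"
  have "continuous_on unit_square ?H"
  proof (rule continuous_on_cases_le)
    show "continuous_on {y \<in> unit_square. fst y \<le> 1/2} (\<lambda>y. H (2 * fst y, snd y))"
      by (rule continuous_on_compose2[OF H(1)]) (auto intro!: continuous_intros)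
    show "continuous_on {y \<in> unit_square. 1/2 \<le> fst y} (\<lambda>y. H' (2 * fst y - 1, snd y))"
      by (rule continuous_on_compose2[OF H'(1)]) (auto intro!: continuous_intros)
    fix y assume "y \<in> unit_square" "fst y = 1/2"
    then have "2 * fst y = 1" "2 * fst y - 1 = 0" "snd y \<in> {0..1}" by (auto simp: mem_Times_iff)
    then show "H (2 * fst y, snd y) = H' (2 * fst y - 1, snd y)" using H(3) H'(3) by simp
  qed (intro continuous_intros)
  moreover have "?H ` unit_square \<subseteq> ext n phi"
    using H(2) H'(2) by (auto simp: image_subset_iff)
  moreover have "\<forall>t\<in>{0..(1::real)}. ?H (t, 0) = z0 \<and> ?H (t, 1) = z1 \<and> ?H (t, 1/2) \<in> bdry n phi"
    using H(4) H'(4) by auto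
  ultimately show ?thesis unfolding bequiv_def using H(3) H'(3) by (intro exI[of _ ?H]) auto
qed

lemma equiv_brel: "equiv (bpairs n phi z0 z1) (brel n phi z0 z1)"
  unfolding equiv_def refl_on_def sym_def trans_def brel_def
  using bequiv_refl bequiv_sym bequiv_trans by blast

text \<open>Swapping the two paths of every pair and the two base points is a symmetry of the
  relation: reverse the homotopy in the path parameter.\<close>

lemma bequiv_swap:
  assumes "a \<in> bpairs n phi z0 z1" "b \<in> bpairs n phi z0 z1" "bequiv n phi z0 z1 a b"
  shows "bequiv n phi z1 z0 (prod.swap a) (prod.swap b)"
proof -
  obtain H where H: "continuous_on unit_square H" "H ` unit_square \<subseteq> ext n phi"
    "\<And>s. s \<in> {0..1} \<Longrightarrow> H (0, s) = (reversepath (fst a) +++ snd a) s"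
    "\<And>s. s \<in> {0..1} \<Longrightarrow> H (1, s) = (reversepath (fst b) +++ snd b) s"
    "\<And>t. t \<in> {0..1} \<Longrightarrow> H (t, 0) = z0 \<and> H (t, 1) = z1 \<and> H (t, 1/2) \<in> bdry n phi"
    using bequivE[OF assms(3)] by blast
  have rev: "(reversepath (snd c) +++ fst c) s = (reversepath (fst c) +++ snd c) (1 - s)"
    if "c \<in> bpairs n phi z0 z1" for c s
  proof -
    have "reversepath (reversepath (fst c) +++ snd c) = reversepath (snd c) +++ fst c"
      using bpairsD(6)[OF that] by (simp add: reversepath_joinpaths)
    then show ?thesis by (metis reversepath_def)
  qed
  have "continuous_on unit_square (\<lambda>y. H (fst y, 1 - snd y))"
    by (rule continuous_on_compose2[OF H(1)]) (auto intro!: continuous_intros)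
  moreover have "(\<lambda>y. H (fst y, 1 - snd y)) ` unit_square \<subseteq> ext n phi"
    using H(2) by (auto simp: image_subset_iff)
  ultimately show ?thesis
    unfolding bequiv_def using H(3-5) rev[OF assms(1)] rev[OF assms(2)]
    by (intro exI[of _ "\<lambda>y. H (fst y, 1 - snd y)"]) auto
qed

text \<open>Cut the given homotopy at the boundary point and prepend the reversed loop to the
  first half.\<close>

lemma bequiv_append_loop_fst:
  assumes eq: "bequiv n phi z0 z1 a b" and a: "a \<in> bpairs n phi z0 z1" and b: "b \<in> bpairs n phi z0 z1"
    and l: "loop_in (ext n phi) z0 l"
  shows "bequiv n phi z0 z1 (fst a +++ l, snd a) (fst b +++ l, snd b)"
proof -
  obtain H where H: "continuous_on unit_square H" "H ` unit_square \<subseteq> ext n phi"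
    "\<And>s. s \<in> {0..1} \<Longrightarrow> H (0, s) = (reversepath (fst a) +++ snd a) s"
    "\<And>s. s \<in> {0..1} \<Longrightarrow> H (1, s) = (reversepath (fst b) +++ snd b) s"
    "\<And>t. t \<in> {0..1} \<Longrightarrow> H (t, 0) = z0 \<and> H (t, 1) = z1 \<and> H (t, 1/2) \<in> bdry n phi"
    using bequivE[OF eq] by blast
  have l': "path l" "path_image l \<subseteq> ext n phi" "pathstart l = z0" "pathfinish l = z0"
    using l unfolding loop_in_def by auto
  let ?Ka = "\<lambda>y. (reversepath l +++ (\<lambda>s. H (fst y, s / 2))) (snd y)"
  let ?Kb = "\<lambda>y. H (fst y, (snd y + 1) / 2)"
  have ends: "?Ka (i,s) = reversepath (fst c +++ l) s \<and> ?Kb (i,s) = snd c s"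
    if c: "c \<in> bpairs n phi z0 z1" and Hi: "\<And>s. s \<in> {0..1} \<Longrightarrow> H (i, s) = (reversepath (fst c) +++ snd c) s"
      and s: "s \<in> {0..1}" for c i s
  proof
    have "reversepath (fst c +++ l) = reversepath l +++ reversepath (fst c)"
      using bpairsD(7)[OF c] l'(3) by (simp add: reversepath_joinpaths)
    then show "?Ka (i,s) = reversepath (fst c +++ l) s"
      using Hi by (auto intro!: joinpaths_cong_on[OF _ _ s] simp: joinpaths_half_left)
    have "pathfinish (reversepath (fst c)) = pathstart (snd c)" using bpairsD(6)[OF c] by simp
    from joinpaths_half_right[OF s this] show "?Kb (i,s) = snd c s" using Hi[of "(s+1)/2"] s by simp
  qed
  show ?thesis
  proof (rule bequivI_join[where Ka = ?Ka and Kb = ?Kb])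
    have "continuous_on unit_square (\<lambda>y. H (fst y, snd y / 2))"
      by (rule continuous_on_square_reparam[OF H(1)]) (auto intro!: continuous_intros)
    then show "continuous_on unit_square ?Ka"
      using continuous_on_homotopic_join_lemma[of "\<lambda>t. reversepath l" "\<lambda>t s. H (t, s / 2)"]
        continuous_on_path_snd[OF path_reversepath[THEN iffD2, OF l'(1)]] H(5) l'(3)
      by (simp add: pathstart_def)
    show "continuous_on unit_square ?Kb"
      by (rule continuous_on_square_reparam[OF H(1)]) (auto intro!: continuous_intros)
    have "H (t, s) \<in> ext n phi" if "t \<in> {0..1}" "s \<in> {0..1}" for t s
      using H(2) that by (auto simp: image_subset_iff)
    moreover have "reversepath l s \<in> ext n phi" if "s \<in> {0..1}" for s
      using l'(2) that by (auto simp: path_image_def reversepath_def)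
    ultimately show "?Ka ` unit_square \<subseteq> ext n phi" "?Kb ` unit_square \<subseteq> ext n phi"
      by (auto intro!: joinpaths_in)
  next
    fix t :: real assume "t \<in> {0..1}"
    then show "?Ka (t,0) = z0 \<and> ?Kb (t,1) = z1 \<and> ?Ka (t,1) = ?Kb (t,0) \<and> ?Ka (t,1) \<in> bdry n phi"
      using H(5) l'(4) by (simp add: joinpaths_def reversepath_def pathfinish_def)
  qed (use ends[OF a H(3)] ends[OF b H(4)] in simp_all)
qed

lemma bequiv_append_loop_snd:
  assumes "bequiv n phi z0 z1 a b" "a \<in> bpairs n phi z0 z1" "b \<in> bpairs n phi z0 z1"
    and "loop_in (ext n phi) z1 l"
  shows "bequiv n phi z0 z1 (fst a, snd a +++ l) (fst b, snd b +++ l)"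
proof -
  have "bequiv n phi z1 z0 (snd a +++ l, fst a) (snd b +++ l, fst b)"
    using bequiv_append_loop_fst[OF bequiv_swap[OF assms(2,3,1)]] assms(2-4) by simp
  moreover have "(snd c +++ l, fst c) \<in> bpairs n phi z1 z0" if "c \<in> bpairs n phi z0 z1" for c
    using swap_in_bpairs_iff[of "(fst c, snd c +++ l)"] append_loop_snd_in_bpairs[OF that assms(4)] by simp
  ultimately show ?thesis using bequiv_swap assms(2,3) by fastforce
qed

lemma bequiv_homotopic:
  assumes a: "a \<in> bpairs n phi z0 z1" and b: "b \<in> bpairs n phi z0 z1"
    and "homotopic_paths (ext n phi) (fst a) (fst b)" "homotopic_paths (ext n phi) (snd a) (snd b)"
  shows "bequiv n phi z0 z1 a b"
proof -
  obtain Ka where Ka: "continuous_on unit_square Ka" "Ka \<in> unit_square \<rightarrow> ext n phi"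
    "\<forall>x \<in> {0..1}. Ka (0,x) = reversepath (fst a) x" "\<forall>x \<in> {0..1}. Ka (1,x) = reversepath (fst b) x"
    "\<forall>t \<in> {0..1}. pathstart (Ka \<circ> Pair t) = pathstart (reversepath (fst a))
       \<and> pathfinish (Ka \<circ> Pair t) = pathfinish (reversepath (fst a))"
    using homotopic_paths_reversepath[THEN iffD2, OF assms(3)] unfolding homotopic_paths by blast
  obtain Kb where Kb: "continuous_on unit_square Kb" "Kb \<in> unit_square \<rightarrow> ext n phi"
    "\<forall>x \<in> {0..1}. Kb (0,x) = snd a x" "\<forall>x \<in> {0..1}. Kb (1,x) = snd b x"
    "\<forall>t \<in> {0..1}. pathstart (Kb \<circ> Pair t) = pathstart (snd a) \<and> pathfinish (Kb \<circ> Pair t) = pathfinish (snd a)"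
    using assms(4) unfolding homotopic_paths by blast
  show ?thesis
    by (rule bequivI_join[OF Ka(1) Kb(1)])
       (use Ka Kb bpairsD[OF a] in \<open>auto simp: pathstart_def pathfinish_def reversepath_def image_subset_iff_funcset\<close>)
qed

section \<open>Conjugated meridians\<close>

definition meridian_loop :: "nat \<Rightarrow> (nat \<Rightarrow> complex \<Rightarrow> complex \<Rightarrow> real^4) \<Rightarrow> (real \<Rightarrow> real^4) \<Rightarrow> real \<Rightarrow> real^4" where
  "meridian_loop n phi c = reversepath c +++ (meridian n phi (pathstart c) +++ c)"

locale link_exterior = tubular_link +
  assumes bdry_in_ext: "bdry n phi \<subseteq> ext n phi"
begin

lemma loop_in_meridian_loop:
  assumes "path c" "path_image c \<subseteq> ext n phi" "pathstart c \<in> bdry n phi"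
  shows "loop_in (ext n phi) (pathfinish c) (meridian_loop n phi c)"
  using assms path_meridian[OF assms(3)] path_image_meridian[OF assms(3)] bdry_in_ext
    pathstart_meridian[OF assms(3)] pathfinish_meridian[OF assms(3)]
  unfolding loop_in_def meridian_loop_def by (auto simp: path_image_join)

text \<open>Conjugates \<open>k\<^sub>t \<cdot> m \<cdot> k\<^sub>t\<^sup>-\<^sup>1\<close> of the meridians at the endpoints of a family of paths \<open>k\<^sub>t\<close>
  ending on the boundary are homotopic, since the meridians vary continuously.\<close>

lemma homotopic_conjugated_meridians:
  assumes K: "continuous_on unit_square K" "K ` unit_square \<subseteq> ext n phi"
    and ends: "\<And>t. t \<in> {0..1} \<Longrightarrow> K (t,0) = z \<and> K (t,1) \<in> bdry n phi"
  shows "homotopic_paths (ext n phi)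
     ((\<lambda>s. K (0,s)) +++ (meridian n phi (K (0,1)) +++ reversepath (\<lambda>s. K (0,s))))
     ((\<lambda>s. K (1,s)) +++ (meridian n phi (K (1,1)) +++ reversepath (\<lambda>s. K (1,s))))"
proof -
  define g where "g t = (\<lambda>s. K (t,s)) +++ (meridian n phi (K (t,1)) +++ reversepath (\<lambda>s. K (t,s)))" for t
  have K_in: "K (t, s) \<in> ext n phi" if "t \<in> {0..1}" "s \<in> {0..1}" for t s
    using K(2) that by (auto simp: image_subset_iff)
  have "continuous_on {0..1} (\<lambda>t. K (t, 1))"
    by (rule continuous_on_compose2[OF K(1)]) (auto intro!: continuous_intros)
  moreover have "(\<lambda>t. K (t, 1)) ` {0..1} \<subseteq> bdry n phi" using ends by auto
  ultimately have m: "continuous_on unit_square (\<lambda>y. meridian n phi (K (fst y, 1)) (snd y))"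
    using continuous_on_meridian[OF _ _ connected_Icc] by blast
  have r: "continuous_on unit_square (\<lambda>y. reversepath (\<lambda>s. K (fst y, s)) (snd y))"
    unfolding reversepath_def by (rule continuous_on_square_reparam[OF K(1)]) (auto intro!: continuous_intros)
  have "continuous_on unit_square (\<lambda>y. (meridian n phi (K (fst y, 1)) +++ reversepath (\<lambda>s. K (fst y, s))) (snd y))"
    using continuous_on_homotopic_join_lemma[of "\<lambda>t. meridian n phi (K (t, 1))" "\<lambda>t. reversepath (\<lambda>s. K (t, s))", OF m r]
      pathfinish_meridian ends by (simp add: pathstart_def reversepath_def)
  then have c: "continuous_on unit_square (\<lambda>y. g (fst y) (snd y))"
    unfolding g_def
    using continuous_on_homotopic_join_lemma[of "\<lambda>t s. K (t, s)" "\<lambda>t. meridian n phi (K (t, 1)) +++ reversepath (\<lambda>s. K (t, s))"]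
      K(1) pathstart_meridian ends by (simp add: pathfinish_def)
  have im: "g t s \<in> ext n phi" if t: "t \<in> {0..1}" and s: "s \<in> {0..1}" for t s
    unfolding g_def
  proof (intro joinpaths_in[OF _ _ s] joinpaths_in)
    show "meridian n phi (K (t, 1)) y \<in> ext n phi" if "y \<in> {0..1}" for y
      using path_image_meridian[of "K (t,1)"] ends[OF t] bdry_in_ext that unfolding path_image_def by blast
  qed (use K_in t in \<open>auto simp: reversepath_def\<close>)
  have "pathstart (g t) = z" "pathfinish (g t) = z" if "t \<in> {0..1}" for t
    using ends[OF that] by (simp_all add: g_def pathstart_def pathfinish_def joinpaths_def reversepath_def)
  then show ?thesis
    unfolding g_def[symmetric] homotopic_paths using c im
    by (intro exI[of _ "\<lambda>y. g (fst y) (snd y)"]) (auto simp: pathstart_def pathfinish_def)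
qed

lemma homotopic_meridian_loop_fst:
  assumes eq: "bequiv n phi z0 z1 a b" and a: "a \<in> bpairs n phi z0 z1" and b: "b \<in> bpairs n phi z0 z1"
  shows "homotopic_paths (ext n phi) (meridian_loop n phi (fst a)) (meridian_loop n phi (fst b))"
proof -
  obtain H where H: "continuous_on unit_square H" "H ` unit_square \<subseteq> ext n phi"
    "\<And>s. s \<in> {0..1} \<Longrightarrow> H (0, s) = (reversepath (fst a) +++ snd a) s"
    "\<And>s. s \<in> {0..1} \<Longrightarrow> H (1, s) = (reversepath (fst b) +++ snd b) s"
    "\<And>t. t \<in> {0..1} \<Longrightarrow> H (t, 0) = z0 \<and> H (t, 1) = z1 \<and> H (t, 1/2) \<in> bdry n phi"
    using bequivE[OF eq] by blast
  have "continuous_on unit_square (\<lambda>y. H (fst y, snd y / 2))"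
    by (rule continuous_on_square_reparam[OF H(1)]) (auto intro!: continuous_intros)
  moreover have "(\<lambda>y. H (fst y, snd y / 2)) ` unit_square \<subseteq> ext n phi"
    using H(2) by (auto simp: image_subset_iff)
  ultimately have conj: "homotopic_paths (ext n phi)
     ((\<lambda>s. H (0, s/2)) +++ (meridian n phi (H (0, 1/2)) +++ reversepath (\<lambda>s. H (0, s/2))))
     ((\<lambda>s. H (1, s/2)) +++ (meridian n phi (H (1, 1/2)) +++ reversepath (\<lambda>s. H (1, s/2))))"
    using homotopic_conjugated_meridians[of "\<lambda>y. H (fst y, snd y / 2)"] H(5) by simp
  have unfold: "homotopic_paths (ext n phi) (meridian_loop n phi (fst c))
       ((\<lambda>s. H (i, s/2)) +++ (meridian n phi (H (i,1/2)) +++ reversepath (\<lambda>s. H (i, s/2))))"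
    if c: "c \<in> bpairs n phi z0 z1" and Hi: "\<And>s. s \<in> {0..1} \<Longrightarrow> H (i, s) = (reversepath (fst c) +++ snd c) s"
    for c i
  proof (rule homotopic_paths_eq)
    have first_half: "H (i, t/2) = reversepath (fst c) t" if "t \<in> {0..1}" for t
      using Hi[of "t/2"] that joinpaths_half_left[OF that] by simp
    then have "H (i, 1/2) = pathstart (fst c)" by (simp add: reversepath_def pathstart_def)
    then show "meridian_loop n phi (fst c) t =
        ((\<lambda>s. H (i, s/2)) +++ (meridian n phi (H (i,1/2)) +++ reversepath (\<lambda>s. H (i, s/2)))) t"
      if "t \<in> {0..1}" for t
      unfolding meridian_loop_def using first_half that
      by (auto intro!: joinpaths_cong_on simp: reversepath_def)
    show "path (meridian_loop n phi (fst c))" "path_image (meridian_loop n phi (fst c)) \<subseteq> ext n phi"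
      using loop_in_meridian_loop[of "fst c"] bpairsD[OF c] unfolding loop_in_def by auto
  qed
  show ?thesis
    using homotopic_paths_trans[OF homotopic_paths_trans[OF unfold[OF a H(3)] conj]
        homotopic_paths_sym[OF unfold[OF b H(4)]]] .
qed

lemma homotopic_meridian_loop_snd:
  assumes "bequiv n phi z0 z1 a b" "a \<in> bpairs n phi z0 z1" "b \<in> bpairs n phi z0 z1"
  shows "homotopic_paths (ext n phi) (meridian_loop n phi (snd a)) (meridian_loop n phi (snd b))"
  using homotopic_meridian_loop_fst[OF bequiv_swap[OF assms(2,3,1)]] assms(2,3) by simp

lemma meridian_loop_joinpaths:
  assumes a: "path a" "path_image a \<subseteq> ext n phi" "pathstart a \<in> bdry n phi" "pathfinish a = z"
    and l: "loop_in (ext n phi) z l"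
  shows "homotopic_paths (ext n phi) (meridian_loop n phi (a +++ l))
    (reversepath l +++ (meridian_loop n phi a +++ l))"
proof -
  let ?m = "meridian n phi (pathstart a)"
  have m: "path ?m" "path_image ?m \<subseteq> ext n phi" "pathstart ?m = pathstart a" "pathfinish ?m = pathstart a"
    using path_meridian[OF a(3)] path_image_meridian[OF a(3)] pathstart_meridian[OF a(3)]
      pathfinish_meridian[OF a(3)] bdry_in_ext by auto
  have l': "path l" "path_image l \<subseteq> ext n phi" "pathstart l = z" "pathfinish l = z"
    using l unfolding loop_in_def by auto
  have e: "meridian_loop n phi (a +++ l) = (reversepath l +++ reversepath a) +++ (?m +++ (a +++ l))"
    unfolding meridian_loop_def using a(4) l'(3) by (simp add: reversepath_joinpaths)
  have s1: "homotopic_paths (ext n phi) ((reversepath l +++ reversepath a) +++ (?m +++ (a +++ l)))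
      (reversepath l +++ (reversepath a +++ (?m +++ (a +++ l))))"
    by (rule homotopic_paths_sym, rule homotopic_paths_assoc) (use a m l' in \<open>simp_all add: path_image_join\<close>)
  have as1: "homotopic_paths (ext n phi) (?m +++ (a +++ l)) ((?m +++ a) +++ l)"
    by (rule homotopic_paths_assoc) (use a m l' in \<open>simp_all add: path_image_join\<close>)
  have "homotopic_paths (ext n phi) (reversepath a +++ (?m +++ (a +++ l))) (reversepath a +++ ((?m +++ a) +++ l))"
    by (rule homotopic_paths_join[OF _ as1]) (use a m l' in \<open>simp_all add: path_image_join\<close>)
  also have "homotopic_paths (ext n phi) \<dots> ((reversepath a +++ (?m +++ a)) +++ l)"
    by (rule homotopic_paths_assoc) (use a m l' in \<open>simp_all add: path_image_join\<close>)
  finally have as2: "homotopic_paths (ext n phi) (reversepath a +++ (?m +++ (a +++ l)))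
      ((reversepath a +++ (?m +++ a)) +++ l)" .
  have "homotopic_paths (ext n phi) (reversepath l +++ (reversepath a +++ (?m +++ (a +++ l))))
      (reversepath l +++ ((reversepath a +++ (?m +++ a)) +++ l))"
    by (rule homotopic_paths_join[OF _ as2]) (use a m l' in \<open>simp_all add: path_image_join\<close>)
  then show ?thesis unfolding e using s1 by (simp only: meridian_loop_def homotopic_paths_trans)
qed

end

section \<open>The biquandle operations as actions of loops\<close>

locale link_biquandle = link_exterior +
  fixes z0 z1 :: "real^4"
  assumes z0_in_ext: "z0 \<in> ext n phi" and z1_in_ext: "z1 \<in> ext n phi"
begin

abbreviation "Pairs \<equiv> bpairs n phi z0 z1"
abbreviation "R \<equiv> brel n phi z0 z1"
abbreviation "X \<equiv> topbiq n phi z0 z1"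
abbreviation "E \<equiv> ext n phi"
abbreviation "bup \<equiv> bq_up n phi z0 z1"
abbreviation "bdown \<equiv> bq_down n phi z0 z1"

definition rep :: "bpair set \<Rightarrow> bpair" where
  "rep C = (SOME a. a \<in> C)"

definition class_act :: "(bpair \<Rightarrow> bpair) \<Rightarrow> bpair set \<Rightarrow> bpair set" where
  "class_act f C = R `` {f (rep C)}"

definition respects_bequiv :: "(bpair \<Rightarrow> bpair) \<Rightarrow> bool" where
  "respects_bequiv f \<longleftrightarrow> (\<forall>r\<in>Pairs. f r \<in> Pairs \<and> (\<forall>s\<in>Pairs. bequiv n phi z0 z1 r s \<longrightarrow> bequiv n phi z0 z1 (f r) (f s)))"

lemma brel_iff: "(r, s) \<in> R \<longleftrightarrow> r \<in> Pairs \<and> s \<in> Pairs \<and> bequiv n phi z0 z1 r s"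
  unfolding brel_def by simp

lemma class_eqI: "r \<in> Pairs \<Longrightarrow> s \<in> Pairs \<Longrightarrow> bequiv n phi z0 z1 r s \<Longrightarrow> R `` {r} = R `` {s}"
  using equiv_class_eq[OF equiv_brel] brel_iff by blast

lemma class_in_X: "r \<in> Pairs \<Longrightarrow> R `` {r} \<in> X"
  unfolding topbiq_def by (rule quotientI)

lemma mem_class_self: "r \<in> Pairs \<Longrightarrow> r \<in> R `` {r}"
  by (rule equiv_class_self[OF equiv_brel])

lemma class_of_mem:
  assumes "C \<in> X" "r \<in> C"
  shows "C = R `` {r}" "r \<in> Pairs"
proof -
  obtain x where x: "x \<in> Pairs" "C = R `` {x}"
    using assms(1) unfolding topbiq_def by (auto elim: quotientE)
  then have "(x, r) \<in> R" using assms(2) by simp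
  then show "r \<in> Pairs" by (simp add: brel_iff)
  show "C = R `` {r}" using x \<open>(x, r) \<in> R\<close> equiv_class_eq[OF equiv_brel] by metis
qed

lemma rep_mem:
  assumes "C \<in> X" shows "rep C \<in> C"
proof -
  obtain x where "x \<in> Pairs" "C = R `` {x}"
    using assms unfolding topbiq_def by (auto elim: quotientE)
  then have "x \<in> C" using mem_class_self by simp
  then show ?thesis unfolding rep_def by (rule someI)
qed

lemma rep_in_Pairs: "C \<in> X \<Longrightarrow> rep C \<in> Pairs"
  using class_of_mem(2) rep_mem by blast

lemma bequiv_rep: "C \<in> X \<Longrightarrow> r \<in> C \<Longrightarrow> bequiv n phi z0 z1 (rep C) r"
  using class_of_mem rep_mem brel_iff by (metis Image_singleton_iff)

lemma respects_bequivD: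
  assumes "respects_bequiv f" "r \<in> Pairs"
  shows "f r \<in> Pairs" "s \<in> Pairs \<Longrightarrow> bequiv n phi z0 z1 r s \<Longrightarrow> bequiv n phi z0 z1 (f r) (f s)"
  using assms unfolding respects_bequiv_def by blast+

lemma class_act_in:
  assumes "respects_bequiv f" "C \<in> X" shows "class_act f C \<in> X"
  unfolding class_act_def by (rule class_in_X[OF respects_bequivD(1)[OF assms(1) rep_in_Pairs[OF assms(2)]]])

lemma class_act_eq:
  assumes "respects_bequiv f" "C \<in> X" "r \<in> C"
  shows "class_act f C = R `` {f r}"
proof -
  note r = rep_in_Pairs[OF assms(2)] class_of_mem(2)[OF assms(2,3)]
  show ?thesis unfolding class_act_def
    by (rule class_eqI[OF respects_bequivD(1)[OF assms(1) r(1)] respects_bequivD(1)[OF assms(1) r(2)]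
          respects_bequivD(2)[OF assms(1) r bequiv_rep[OF assms(2,3)]]])
qed

lemma mem_class_act:
  assumes "respects_bequiv f" "C \<in> X" shows "f (rep C) \<in> class_act f C"
  unfolding class_act_def by (rule mem_class_self[OF respects_bequivD(1)[OF assms(1) rep_in_Pairs[OF assms(2)]]])

lemma class_act_comp:
  assumes "respects_bequiv f" "respects_bequiv g" "C \<in> X"
  shows "class_act g (class_act f C) = class_act (g \<circ> f) C"
  using class_act_eq[OF assms(2) class_act_in[OF assms(1,3)] mem_class_act[OF assms(1,3)]]
  by (simp add: class_act_def)

lemma class_act_cong:
  assumes "C \<in> X" "f (rep C) \<in> Pairs" "g (rep C) \<in> Pairs" "bequiv n phi z0 z1 (f (rep C)) (g (rep C))"
  shows "class_act f C = class_act g C"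
  unfolding class_act_def using assms(2-4) by (rule class_eqI)

lemma class_act_triv:
  assumes "C \<in> X" "f (rep C) \<in> Pairs" "bequiv n phi z0 z1 (f (rep C)) (rep C)"
  shows "class_act f C = C"
  using class_eqI[OF assms(2) rep_in_Pairs[OF assms(1)] assms(3)] class_of_mem(1)[OF assms(1) rep_mem[OF assms(1)]]
  unfolding class_act_def by simp

text \<open>By \<open>bq_up_eq\<close> and \<open>bq_down_eq\<close> below, \<open>x \<up> y = act0 x (mloop0 y)\<close> and
  \<open>x \<down> y = act1 x (mloop1 y)\<close>.\<close>

definition act0 :: "bpair set \<Rightarrow> (real \<Rightarrow> real^4) \<Rightarrow> bpair set" where
  "act0 C l = class_act (\<lambda>r. (fst r +++ l, snd r)) C"

definition act1 :: "bpair set \<Rightarrow> (real \<Rightarrow> real^4) \<Rightarrow> bpair set" where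
  "act1 C l = class_act (\<lambda>r. (fst r, snd r +++ l)) C"

lemma respects_append_fst: "loop_in E z0 l \<Longrightarrow> respects_bequiv (\<lambda>r. (fst r +++ l, snd r))"
  unfolding respects_bequiv_def by (auto intro: append_loop_fst_in_bpairs bequiv_append_loop_fst)

lemma respects_append_snd: "loop_in E z1 l \<Longrightarrow> respects_bequiv (\<lambda>r. (fst r, snd r +++ l))"
  unfolding respects_bequiv_def by (auto intro: append_loop_snd_in_bpairs bequiv_append_loop_snd)

lemma act0_in: "C \<in> X \<Longrightarrow> loop_in E z0 l \<Longrightarrow> act0 C l \<in> X"
  unfolding act0_def by (rule class_act_in[OF respects_append_fst])

lemma act1_in: "C \<in> X \<Longrightarrow> loop_in E z1 l \<Longrightarrow> act1 C l \<in> X"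
  unfolding act1_def by (rule class_act_in[OF respects_append_snd])

lemma act0_eq: "C \<in> X \<Longrightarrow> r \<in> C \<Longrightarrow> loop_in E z0 l \<Longrightarrow> act0 C l = R `` {(fst r +++ l, snd r)}"
  unfolding act0_def by (rule class_act_eq[OF respects_append_fst])

lemma act1_eq: "C \<in> X \<Longrightarrow> r \<in> C \<Longrightarrow> loop_in E z1 l \<Longrightarrow> act1 C l = R `` {(fst r, snd r +++ l)}"
  unfolding act1_def by (rule class_act_eq[OF respects_append_snd])

lemma mem_act0: "C \<in> X \<Longrightarrow> loop_in E z0 l \<Longrightarrow> (fst (rep C) +++ l, snd (rep C)) \<in> act0 C l"
  unfolding act0_def using mem_class_act[OF respects_append_fst] by simp

lemma mem_act1: "C \<in> X \<Longrightarrow> loop_in E z1 l \<Longrightarrow> (fst (rep C), snd (rep C) +++ l) \<in> act1 C l"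
  unfolding act1_def using mem_class_act[OF respects_append_snd] by simp

lemma act0_act1_commute:
  "C \<in> X \<Longrightarrow> loop_in E z0 l \<Longrightarrow> loop_in E z1 l' \<Longrightarrow> act0 (act1 C l') l = act1 (act0 C l) l'"
  using act0_eq[OF act1_in mem_act1] act1_eq[OF act0_in mem_act0] by simp

lemma act0_homotopic:
  assumes "C \<in> X" "loop_in E z0 l" "homotopic_paths E l l'"
  shows "act0 C l = act0 C l'"
  unfolding act0_def
proof (rule class_act_cong[OF assms(1)])
  note r = rep_in_Pairs[OF assms(1)]
  have l': "loop_in E z0 l'" by (rule loop_in_homotopic[OF assms(3,2)])
  show "(fst (rep C) +++ l, snd (rep C)) \<in> Pairs" "(fst (rep C) +++ l', snd (rep C)) \<in> Pairs"
    using append_loop_fst_in_bpairs[OF r] assms(2) l' by simp_all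
  then show "bequiv n phi z0 z1 (fst (rep C) +++ l, snd (rep C)) (fst (rep C) +++ l', snd (rep C))"
    using bpairsD[OF r] assms(2,3)
    by (intro bequiv_homotopic) (simp_all add: homotopic_paths_join loop_in_def)
qed

lemma act1_homotopic:
  assumes "C \<in> X" "loop_in E z1 l" "homotopic_paths E l l'"
  shows "act1 C l = act1 C l'"
  unfolding act1_def
proof (rule class_act_cong[OF assms(1)])
  note r = rep_in_Pairs[OF assms(1)]
  have l': "loop_in E z1 l'" by (rule loop_in_homotopic[OF assms(3,2)])
  show "(fst (rep C), snd (rep C) +++ l) \<in> Pairs" "(fst (rep C), snd (rep C) +++ l') \<in> Pairs"
    using append_loop_snd_in_bpairs[OF r] assms(2) l' by simp_all
  then show "bequiv n phi z0 z1 (fst (rep C), snd (rep C) +++ l) (fst (rep C), snd (rep C) +++ l')"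
    using bpairsD[OF r] assms(2,3)
    by (intro bequiv_homotopic) (simp_all add: homotopic_paths_join loop_in_def)
qed

lemma act0_joinpaths:
  assumes "C \<in> X" "loop_in E z0 l1" "loop_in E z0 l2"
  shows "act0 (act0 C l1) l2 = act0 C (l1 +++ l2)"
  unfolding act0_def
proof (subst class_act_comp[OF respects_append_fst respects_append_fst], (fact assms)+,
    rule class_act_cong[OF assms(1)])
  note r = rep_in_Pairs[OF assms(1)]
  show a: "((\<lambda>r. (fst r +++ l2, snd r)) \<circ> (\<lambda>r. (fst r +++ l1, snd r))) (rep C) \<in> Pairs"
    using append_loop_fst_in_bpairs[OF append_loop_fst_in_bpairs[OF r assms(2)] assms(3)] by simp
  show b: "(fst (rep C) +++ (l1 +++ l2), snd (rep C)) \<in> Pairs"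
    using append_loop_fst_in_bpairs[OF r loop_in_joinpaths[OF assms(2,3)]] by simp
  show "bequiv n phi z0 z1 (((\<lambda>r. (fst r +++ l2, snd r)) \<circ> (\<lambda>r. (fst r +++ l1, snd r))) (rep C))
      (fst (rep C) +++ (l1 +++ l2), snd (rep C))"
  proof (rule bequiv_homotopic[OF a b])
    show "homotopic_paths E (fst (((\<lambda>r. (fst r +++ l2, snd r)) \<circ> (\<lambda>r. (fst r +++ l1, snd r))) (rep C)))
        (fst (fst (rep C) +++ (l1 +++ l2), snd (rep C)))"
      using bpairsD[OF r] assms(2,3) unfolding loop_in_def
      by simp (rule homotopic_paths_sym, rule homotopic_paths_assoc, auto)
  qed (use bpairsD[OF r] in simp)
qed

lemma act1_joinpaths:
  assumes "C \<in> X" "loop_in E z1 l1" "loop_in E z1 l2"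
  shows "act1 (act1 C l1) l2 = act1 C (l1 +++ l2)"
  unfolding act1_def
proof (subst class_act_comp[OF respects_append_snd respects_append_snd], (fact assms)+,
    rule class_act_cong[OF assms(1)])
  note r = rep_in_Pairs[OF assms(1)]
  show a: "((\<lambda>r. (fst r, snd r +++ l2)) \<circ> (\<lambda>r. (fst r, snd r +++ l1))) (rep C) \<in> Pairs"
    using append_loop_snd_in_bpairs[OF append_loop_snd_in_bpairs[OF r assms(2)] assms(3)] by simp
  show b: "(fst (rep C), snd (rep C) +++ (l1 +++ l2)) \<in> Pairs"
    using append_loop_snd_in_bpairs[OF r loop_in_joinpaths[OF assms(2,3)]] by simp
  show "bequiv n phi z0 z1 (((\<lambda>r. (fst r, snd r +++ l2)) \<circ> (\<lambda>r. (fst r, snd r +++ l1))) (rep C))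
      (fst (rep C), snd (rep C) +++ (l1 +++ l2))"
  proof (rule bequiv_homotopic[OF a b])
    show "homotopic_paths E (snd (((\<lambda>r. (fst r, snd r +++ l2)) \<circ> (\<lambda>r. (fst r, snd r +++ l1))) (rep C)))
        (snd (fst (rep C), snd (rep C) +++ (l1 +++ l2)))"
      using bpairsD[OF r] assms(2,3) unfolding loop_in_def
      by simp (rule homotopic_paths_sym, rule homotopic_paths_assoc, auto)
  qed (use bpairsD[OF r] in simp)
qed

lemma act0_linepath:
  assumes "C \<in> X" shows "act0 C (linepath z0 z0) = C"
proof -
  note r = rep_in_Pairs[OF assms]
  have p: "(fst (rep C) +++ linepath z0 z0, snd (rep C)) \<in> Pairs"
    by (rule append_loop_fst_in_bpairs[OF r loop_in_linepath[OF z0_in_ext]])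
  have "bequiv n phi z0 z1 (fst (rep C) +++ linepath z0 z0, snd (rep C)) (rep C)"
  proof (rule bequiv_homotopic[OF p r])
    show "homotopic_paths E (fst (fst (rep C) +++ linepath z0 z0, snd (rep C))) (fst (rep C))"
      using homotopic_paths_rid[of "fst (rep C)" E] bpairsD[OF r] by simp
  qed (use bpairsD[OF r] in simp)
  then show ?thesis unfolding act0_def using class_act_triv[OF assms] p by simp
qed

lemma act1_linepath:
  assumes "C \<in> X" shows "act1 C (linepath z1 z1) = C"
proof -
  note r = rep_in_Pairs[OF assms]
  have p: "(fst (rep C), snd (rep C) +++ linepath z1 z1) \<in> Pairs"
    by (rule append_loop_snd_in_bpairs[OF r loop_in_linepath[OF z1_in_ext]])
  have "bequiv n phi z0 z1 (fst (rep C), snd (rep C) +++ linepath z1 z1) (rep C)"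
  proof (rule bequiv_homotopic[OF p r])
    show "homotopic_paths E (snd (fst (rep C), snd (rep C) +++ linepath z1 z1)) (snd (rep C))"
      using homotopic_paths_rid[of "snd (rep C)" E] bpairsD[OF r] by simp
  qed (use bpairsD[OF r] in simp)
  then show ?thesis unfolding act1_def using class_act_triv[OF assms] p by simp
qed

definition mloop0 :: "bpair set \<Rightarrow> real \<Rightarrow> real^4" where
  "mloop0 C = meridian_loop n phi (fst (rep C))"

definition mloop1 :: "bpair set \<Rightarrow> real \<Rightarrow> real^4" where
  "mloop1 C = meridian_loop n phi (snd (rep C))"

lemma bq_up_eq: "bup C D = act0 C (mloop0 D)"
  unfolding bq_up_def act0_def class_act_def rep_def mloop0_def up_rep_def meridian_loop_def by simp

lemma bq_down_eq: "bdown C D = act1 C (mloop1 D)"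
  unfolding bq_down_def act1_def class_act_def rep_def mloop1_def down_rep_def meridian_loop_def by simp

lemma loop_in_mloop0: "C \<in> X \<Longrightarrow> loop_in E z0 (mloop0 C)"
  unfolding mloop0_def using loop_in_meridian_loop[of "fst (rep C)"] bpairsD[OF rep_in_Pairs] by simp

lemma loop_in_mloop1: "C \<in> X \<Longrightarrow> loop_in E z1 (mloop1 C)"
  unfolding mloop1_def using loop_in_meridian_loop[of "snd (rep C)"] bpairsD[OF rep_in_Pairs] by simp

lemma homotopic_mloop0_mem: "C \<in> X \<Longrightarrow> r \<in> C \<Longrightarrow> homotopic_paths E (mloop0 C) (meridian_loop n phi (fst r))"
  unfolding mloop0_def
  by (rule homotopic_meridian_loop_fst[OF bequiv_rep rep_in_Pairs class_of_mem(2)])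

lemma homotopic_mloop1_mem: "C \<in> X \<Longrightarrow> r \<in> C \<Longrightarrow> homotopic_paths E (mloop1 C) (meridian_loop n phi (snd r))"
  unfolding mloop1_def
  by (rule homotopic_meridian_loop_snd[OF bequiv_rep rep_in_Pairs class_of_mem(2)])

lemma homotopic_mloop0_act1: "C \<in> X \<Longrightarrow> loop_in E z1 l \<Longrightarrow> homotopic_paths E (mloop0 (act1 C l)) (mloop0 C)"
  using homotopic_mloop0_mem[OF act1_in mem_act1] unfolding mloop0_def[of C] by simp

lemma homotopic_mloop1_act0: "C \<in> X \<Longrightarrow> loop_in E z0 l \<Longrightarrow> homotopic_paths E (mloop1 (act0 C l)) (mloop1 C)"
  using homotopic_mloop1_mem[OF act0_in mem_act0] unfolding mloop1_def[of C] by simp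

lemma homotopic_mloop0_act0:
  assumes "C \<in> X" "loop_in E z0 l"
  shows "homotopic_paths E (mloop0 (act0 C l)) (reversepath l +++ (mloop0 C +++ l))"
proof -
  note r = bpairsD[OF rep_in_Pairs[OF assms(1)]]
  have "homotopic_paths E (mloop0 (act0 C l)) (meridian_loop n phi (fst (rep C) +++ l))"
    using homotopic_mloop0_mem[OF act0_in[OF assms] mem_act0[OF assms]] by simp
  also have "homotopic_paths E \<dots> (reversepath l +++ (mloop0 C +++ l))"
    unfolding mloop0_def by (rule meridian_loop_joinpaths) (use r assms(2) in simp_all)
  finally show ?thesis .
qed

lemma homotopic_mloop1_act1:
  assumes "C \<in> X" "loop_in E z1 l"
  shows "homotopic_paths E (mloop1 (act1 C l)) (reversepath l +++ (mloop1 C +++ l))"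
proof -
  note r = bpairsD[OF rep_in_Pairs[OF assms(1)]]
  have "homotopic_paths E (mloop1 (act1 C l)) (meridian_loop n phi (snd (rep C) +++ l))"
    using homotopic_mloop1_mem[OF act1_in[OF assms] mem_act1[OF assms]] by simp
  also have "homotopic_paths E \<dots> (reversepath l +++ (mloop1 C +++ l))"
    unfolding mloop1_def by (rule meridian_loop_joinpaths) (use r assms(2) in simp_all)
  finally show ?thesis .
qed

lemma act0_cancel:
  assumes "C \<in> X" "loop_in E z0 l" "homotopic_paths E l' l"
  shows "act0 (act0 C (reversepath l)) l' = C" "act0 (act0 C l') (reversepath l) = C"
proof -
  have l': "loop_in E z0 l'" using loop_in_homotopic[OF homotopic_paths_sym[OF assms(3)] assms(2)] .
  note rl = loop_in_reversepath[OF assms(2)]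
  have "act0 (act0 C (reversepath l)) l' = act0 C (reversepath l +++ l)"
    using act0_joinpaths[OF assms(1) rl l'] act0_homotopic[OF assms(1) loop_in_joinpaths[OF rl l']]
      homotopic_paths_join_loop[OF homotopic_paths_refl_loop[OF rl] assms(3) rl l'] by simp
  also have "\<dots> = C"
    using act0_homotopic[OF assms(1) loop_in_joinpaths[OF rl assms(2)] homotopic_paths_linv_loop[OF assms(2)]]
      act0_linepath[OF assms(1)] by simp
  finally show "act0 (act0 C (reversepath l)) l' = C" .
  have "act0 (act0 C l') (reversepath l) = act0 C (l +++ reversepath l)"
    using act0_joinpaths[OF assms(1) l' rl] act0_homotopic[OF assms(1) loop_in_joinpaths[OF l' rl]]
      homotopic_paths_join_loop[OF assms(3) homotopic_paths_refl_loop[OF rl] l' rl] by simp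
  also have "\<dots> = C"
    using act0_homotopic[OF assms(1) loop_in_joinpaths[OF assms(2) rl] homotopic_paths_rinv_loop[OF assms(2)]]
      act0_linepath[OF assms(1)] by simp
  finally show "act0 (act0 C l') (reversepath l) = C" .
qed

lemma act1_cancel:
  assumes "C \<in> X" "loop_in E z1 l" "homotopic_paths E l' l"
  shows "act1 (act1 C (reversepath l)) l' = C" "act1 (act1 C l') (reversepath l) = C"
proof -
  have l': "loop_in E z1 l'" using loop_in_homotopic[OF homotopic_paths_sym[OF assms(3)] assms(2)] .
  note rl = loop_in_reversepath[OF assms(2)]
  have "act1 (act1 C (reversepath l)) l' = act1 C (reversepath l +++ l)"
    using act1_joinpaths[OF assms(1) rl l'] act1_homotopic[OF assms(1) loop_in_joinpaths[OF rl l']]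
      homotopic_paths_join_loop[OF homotopic_paths_refl_loop[OF rl] assms(3) rl l'] by simp
  also have "\<dots> = C"
    using act1_homotopic[OF assms(1) loop_in_joinpaths[OF rl assms(2)] homotopic_paths_linv_loop[OF assms(2)]]
      act1_linepath[OF assms(1)] by simp
  finally show "act1 (act1 C (reversepath l)) l' = C" .
  have "act1 (act1 C l') (reversepath l) = act1 C (l +++ reversepath l)"
    using act1_joinpaths[OF assms(1) l' rl] act1_homotopic[OF assms(1) loop_in_joinpaths[OF l' rl]]
      homotopic_paths_join_loop[OF assms(3) homotopic_paths_refl_loop[OF rl] l' rl] by simp
  also have "\<dots> = C"
    using act1_homotopic[OF assms(1) loop_in_joinpaths[OF assms(2) rl] homotopic_paths_rinv_loop[OF assms(2)]]
      act1_linepath[OF assms(1)] by simp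
  finally show "act1 (act1 C l') (reversepath l) = C" .
qed

text \<open>The inverse of \<open>S(x,y) = (y \<down> x, x \<up> y)\<close>: the loops appended by \<open>S\<close> only depend on
  the classes up to homotopy, so they can be removed again.\<close>

lemma S_inverse:
  assumes "A \<in> X" "B \<in> X"
  shows "bdown (act1 A (reversepath (mloop1 B))) (act0 B (reversepath (mloop0 A))) = A"
    "bup (act0 B (reversepath (mloop0 A))) (act1 A (reversepath (mloop1 B))) = B"
  using act1_cancel(1)[OF assms(1) loop_in_mloop1[OF assms(2)]
      homotopic_mloop1_act0[OF assms(2) loop_in_reversepath[OF loop_in_mloop0[OF assms(1)]]]]
    act0_cancel(1)[OF assms(2) loop_in_mloop0[OF assms(1)]
      homotopic_mloop0_act1[OF assms(1) loop_in_reversepath[OF loop_in_mloop1[OF assms(2)]]]]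
  by (simp_all add: bq_up_eq bq_down_eq)

lemma S_inverse_unique:
  assumes "x \<in> X" "y \<in> X" "bdown y x = A" "bup x y = B"
  shows "x = act0 B (reversepath (mloop0 A))" "y = act1 A (reversepath (mloop1 B))"
proof -
  have A: "A = act1 y (mloop1 x)" and B: "B = act0 x (mloop0 y)"
    using assms(3,4) by (simp_all add: bq_up_eq bq_down_eq)
  have AX: "A \<in> X" unfolding A by (rule act1_in[OF assms(2) loop_in_mloop1[OF assms(1)]])
  have BX: "B \<in> X" unfolding B by (rule act0_in[OF assms(1) loop_in_mloop0[OF assms(2)]])
  have "homotopic_paths E (mloop0 y) (mloop0 A)"
    unfolding A by (rule homotopic_paths_sym[OF homotopic_mloop0_act1[OF assms(2) loop_in_mloop1[OF assms(1)]]])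
  from act0_cancel(2)[OF assms(1) loop_in_mloop0[OF AX] this]
  show "x = act0 B (reversepath (mloop0 A))" unfolding B by simp
  have "homotopic_paths E (mloop1 x) (mloop1 B)"
    unfolding B by (rule homotopic_paths_sym[OF homotopic_mloop1_act0[OF assms(1) loop_in_mloop0[OF assms(2)]]])
  from act1_cancel(2)[OF assms(2) loop_in_mloop1[OF BX] this]
  show "y = act1 A (reversepath (mloop1 B))" unfolding A by simp
qed

lemma bar_up_eq:
  assumes "B \<in> X" "A \<in> X"
  shows "bar_up X bup bdown B A = act0 B (reversepath (mloop0 A))"
  unfolding bar_up_def
proof (rule the_equality)
  show "act0 B (reversepath (mloop0 A)) \<in> X \<and>
      (\<exists>y\<in>X. bdown y (act0 B (reversepath (mloop0 A))) = A \<and> bup (act0 B (reversepath (mloop0 A))) y = B)"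
    using S_inverse[OF assms(2,1)] act0_in[OF assms(1) loop_in_reversepath[OF loop_in_mloop0[OF assms(2)]]]
      act1_in[OF assms(2) loop_in_reversepath[OF loop_in_mloop1[OF assms(1)]]] by blast
qed (use S_inverse_unique(1) in blast)

lemma bar_down_eq:
  assumes "A \<in> X" "B \<in> X"
  shows "bar_down X bup bdown A B = act1 A (reversepath (mloop1 B))"
  unfolding bar_down_def
proof (rule the_equality)
  show "act1 A (reversepath (mloop1 B)) \<in> X \<and>
      (\<exists>x\<in>X. bdown (act1 A (reversepath (mloop1 B))) x = A \<and> bup x (act1 A (reversepath (mloop1 B))) = B)"
    using S_inverse[OF assms] act0_in[OF assms(2) loop_in_reversepath[OF loop_in_mloop0[OF assms(1)]]]
      act1_in[OF assms(1) loop_in_reversepath[OF loop_in_mloop1[OF assms(2)]]] by blast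
qed (use S_inverse_unique(2) in blast)

sublocale W0: loop_family E z0 mloop0 X
  by unfold_locales (simp_all add: z0_in_ext loop_in_mloop0)

sublocale W1: loop_family E z1 mloop1 X
  by unfold_locales (simp_all add: z1_in_ext loop_in_mloop1)

lemma signed_up_eq:
  "C \<in> X \<Longrightarrow> c \<in> X \<Longrightarrow> (if e then bup C c else bar_up X bup bdown C c) = act0 C (signed_loop mloop0 c e)"
  by (simp add: bq_up_eq bar_up_eq signed_loop_def)

lemma signed_down_eq:
  "C \<in> X \<Longrightarrow> c \<in> X \<Longrightarrow> (if e then bdown C c else bar_down X bup bdown C c) = act1 C (signed_loop mloop1 c e)"
  by (simp add: bq_down_eq bar_down_eq signed_loop_def)

lemma word_act_up:
  "C \<in> X \<Longrightarrow> set (map fst w) \<subseteq> X \<Longrightarrow> word_act bup (bar_up X bup bdown) C w = act0 C (word_loop z0 mloop0 w)"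
proof (induction w arbitrary: C)
  case Nil
  then show ?case by (simp only: word_act_def foldl_Nil word_loop_Nil act0_linepath)
next
  case (Cons x w)
  obtain c e where x: "x = (c,e)" by fastforce
  have c: "c \<in> X" and w: "set (map fst w) \<subseteq> X" using Cons.prems x by auto
  have "word_act bup (bar_up X bup bdown) C (x # w) = word_act bup (bar_up X bup bdown) (act0 C (signed_loop mloop0 c e)) w"
    using signed_up_eq[OF Cons.prems(1) c] by (simp add: word_act_def x)
  also have "\<dots> = act0 C (signed_loop mloop0 c e +++ word_loop z0 mloop0 w)"
    using Cons.IH[OF act0_in[OF Cons.prems(1) W0.loop_in_signed_loop[OF c]] w]
      act0_joinpaths[OF Cons.prems(1) W0.loop_in_signed_loop[OF c] W0.loop_in_word_loop[OF w]] by simp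
  finally show ?case by (simp add: x)
qed

lemma word_act_down:
  "C \<in> X \<Longrightarrow> set (map fst w) \<subseteq> X \<Longrightarrow> word_act bdown (bar_down X bup bdown) C w = act1 C (word_loop z1 mloop1 w)"
proof (induction w arbitrary: C)
  case Nil
  then show ?case by (simp only: word_act_def foldl_Nil word_loop_Nil act1_linepath)
next
  case (Cons x w)
  obtain c e where x: "x = (c,e)" by fastforce
  have c: "c \<in> X" and w: "set (map fst w) \<subseteq> X" using Cons.prems x by auto
  have "word_act bdown (bar_down X bup bdown) C (x # w) = word_act bdown (bar_down X bup bdown) (act1 C (signed_loop mloop1 c e)) w"
    using signed_down_eq[OF Cons.prems(1) c] by (simp add: word_act_def x)
  also have "\<dots> = act1 C (signed_loop mloop1 c e +++ word_loop z1 mloop1 w)"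
    using Cons.IH[OF act1_in[OF Cons.prems(1) W1.loop_in_signed_loop[OF c]] w]
      act1_joinpaths[OF Cons.prems(1) W1.loop_in_signed_loop[OF c] W1.loop_in_word_loop[OF w]] by simp
  finally show ?case by (simp add: x)
qed

text \<open>By \<open>word_act_up\<close> and \<open>word_act_down\<close>, these are the elements \<open>(a \<up> w\<^sub>1) \<down> w\<^sub>2\<close>.\<close>

definition word_forms :: "bpair set set \<Rightarrow> bpair set set" where
  "word_forms A = {act1 (act0 a (word_loop z0 mloop0 w1)) (word_loop z1 mloop1 w2) | a w1 w2.
     a \<in> A \<and> set (map fst w1) \<subseteq> A \<and> set (map fst w2) \<subseteq> A}"

lemma word_forms_subset: "A \<subseteq> X \<Longrightarrow> word_forms A \<subseteq> X"
  unfolding word_forms_def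
  by (force intro!: act1_in act0_in W0.loop_in_word_loop W1.loop_in_word_loop)

lemma subset_word_forms:
  assumes "A \<subseteq> X" shows "A \<subseteq> word_forms A"
proof
  fix a assume "a \<in> A"
  then have "a = act1 (act0 a (word_loop z0 mloop0 [])) (word_loop z1 mloop1 [])"
    using assms by (simp only: word_loop_Nil act0_linepath act1_linepath subsetD)
  then show "a \<in> word_forms A" unfolding word_forms_def using \<open>a \<in> A\<close> by fastforce
qed

lemma homotopic_mloop0_word_form:
  assumes "b \<in> X" "set (map fst u1) \<subseteq> X" "set (map fst u2) \<subseteq> X"
  shows "homotopic_paths E (mloop0 (act1 (act0 b (word_loop z0 mloop0 u1)) (word_loop z1 mloop1 u2)))
    (reversepath (word_loop z0 mloop0 u1) +++ (mloop0 b +++ word_loop z0 mloop0 u1))"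
  using homotopic_mloop0_act1[OF act0_in[OF assms(1) W0.loop_in_word_loop[OF assms(2)]] W1.loop_in_word_loop[OF assms(3)]]
    homotopic_mloop0_act0[OF assms(1) W0.loop_in_word_loop[OF assms(2)]]
  by (rule homotopic_paths_trans)

lemma homotopic_mloop1_word_form:
  assumes "b \<in> X" "set (map fst u1) \<subseteq> X" "set (map fst u2) \<subseteq> X"
  shows "homotopic_paths E (mloop1 (act1 (act0 b (word_loop z0 mloop0 u1)) (word_loop z1 mloop1 u2)))
    (reversepath (word_loop z1 mloop1 u2) +++ (mloop1 b +++ word_loop z1 mloop1 u2))"
proof -
  let ?b = "act0 b (word_loop z0 mloop0 u1)"
  note l = W1.loop_in_word_loop[OF assms(3)]
  have "homotopic_paths E (mloop1 (act1 ?b (word_loop z1 mloop1 u2)))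
      (reversepath (word_loop z1 mloop1 u2) +++ (mloop1 ?b +++ word_loop z1 mloop1 u2))"
    by (rule homotopic_mloop1_act1[OF act0_in[OF assms(1) W0.loop_in_word_loop[OF assms(2)]] l])
  also have "homotopic_paths E \<dots> (reversepath (word_loop z1 mloop1 u2) +++ (mloop1 b +++ word_loop z1 mloop1 u2))"
    using homotopic_mloop1_act0[OF assms(1) W0.loop_in_word_loop[OF assms(2)]]
      loop_in_mloop1 act0_in assms(1,2) W0.loop_in_word_loop l
    by (intro homotopic_paths_join_loop[OF homotopic_paths_refl_loop[OF loop_in_reversepath[OF l]]]
        homotopic_paths_join_loop[OF _ homotopic_paths_refl_loop[OF l]] loop_in_reversepath loop_in_joinpaths) auto
  finally show ?thesis .
qed

lemma act0_word_form:
  assumes "a \<in> X" "set (map fst w1) \<subseteq> X" "set (map fst w2) \<subseteq> X" "set (map fst u) \<subseteq> X" "b \<in> X"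
    and "loop_in E z0 l"
    and "homotopic_paths E l (reversepath (word_loop z0 mloop0 u) +++ (signed_loop mloop0 b e +++ word_loop z0 mloop0 u))"
  shows "act0 (act1 (act0 a (word_loop z0 mloop0 w1)) (word_loop z1 mloop1 w2)) l
    = act1 (act0 a (word_loop z0 mloop0 (w1 @ word_inverse u @ [(b,e)] @ u))) (word_loop z1 mloop1 w2)"
proof -
  note w1 = W0.loop_in_word_loop[OF assms(2)]
  have "homotopic_paths E (word_loop z0 mloop0 w1 +++ l) (word_loop z0 mloop0 (w1 @ word_inverse u @ [(b,e)] @ u))"
    by (rule homotopic_paths_trans[OF homotopic_paths_join_loop[OF homotopic_paths_refl_loop[OF w1] assms(7) w1 assms(6)]
          homotopic_paths_sym[OF W0.homotopic_word_loop_conjugate[OF assms(2,4,5)]]])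
  then have "act0 a (word_loop z0 mloop0 w1 +++ l) = act0 a (word_loop z0 mloop0 (w1 @ word_inverse u @ [(b,e)] @ u))"
    by (rule act0_homotopic[OF assms(1) loop_in_joinpaths[OF w1 assms(6)]])
  then show ?thesis
    using act0_act1_commute[OF act0_in[OF assms(1) w1] assms(6) W1.loop_in_word_loop[OF assms(3)]]
      act0_joinpaths[OF assms(1) w1 assms(6)] by simp
qed

lemma act1_word_form:
  assumes "x \<in> X" "set (map fst w2) \<subseteq> X" "set (map fst u) \<subseteq> X" "b \<in> X"
    and "loop_in E z1 l"
    and "homotopic_paths E l (reversepath (word_loop z1 mloop1 u) +++ (signed_loop mloop1 b e +++ word_loop z1 mloop1 u))"
  shows "act1 (act1 x (word_loop z1 mloop1 w2)) l = act1 x (word_loop z1 mloop1 (w2 @ word_inverse u @ [(b,e)] @ u))"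
proof -
  note w2 = W1.loop_in_word_loop[OF assms(2)]
  have "homotopic_paths E (word_loop z1 mloop1 w2 +++ l) (word_loop z1 mloop1 (w2 @ word_inverse u @ [(b,e)] @ u))"
    by (rule homotopic_paths_trans[OF homotopic_paths_join_loop[OF homotopic_paths_refl_loop[OF w2] assms(6) w2 assms(5)]
          homotopic_paths_sym[OF W1.homotopic_word_loop_conjugate[OF assms(2,3,4)]]])
  with act1_joinpaths[OF assms(1) w2 assms(5)] show ?thesis
    by (simp add: act1_homotopic[OF assms(1) loop_in_joinpaths[OF w2 assms(5)]])
qed

lemma homotopic_signed_mloop0_word_form:
  assumes "b \<in> X" "set (map fst u1) \<subseteq> X" "set (map fst u2) \<subseteq> X"
  shows "homotopic_paths E (signed_loop mloop0 (act1 (act0 b (word_loop z0 mloop0 u1)) (word_loop z1 mloop1 u2)) e)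
    (reversepath (word_loop z0 mloop0 u1) +++ (signed_loop mloop0 b e +++ word_loop z0 mloop0 u1))"
  using homotopic_mloop0_word_form[OF assms]
    homotopic_paths_reversepath_conjugate[OF W0.loop_in_word_loop[OF assms(2)] loop_in_mloop0[OF assms(1)]
      homotopic_mloop0_word_form[OF assms]]
  by (cases e) (simp_all add: signed_loop_def)

lemma homotopic_signed_mloop1_word_form:
  assumes "b \<in> X" "set (map fst u1) \<subseteq> X" "set (map fst u2) \<subseteq> X"
  shows "homotopic_paths E (signed_loop mloop1 (act1 (act0 b (word_loop z0 mloop0 u1)) (word_loop z1 mloop1 u2)) e)
    (reversepath (word_loop z1 mloop1 u2) +++ (signed_loop mloop1 b e +++ word_loop z1 mloop1 u2))"
  using homotopic_mloop1_word_form[OF assms]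
    homotopic_paths_reversepath_conjugate[OF W1.loop_in_word_loop[OF assms(3)] loop_in_mloop1[OF assms(1)]
      homotopic_mloop1_word_form[OF assms]]
  by (cases e) (simp_all add: signed_loop_def)

lemma word_forms_closed:
  assumes A: "A \<subseteq> X" and "x \<in> word_forms A" "y \<in> word_forms A"
  shows "act0 x (signed_loop mloop0 y e) \<in> word_forms A" "act1 x (signed_loop mloop1 y e) \<in> word_forms A"
proof -
  obtain a w1 w2 where x: "a \<in> A" "set (map fst w1) \<subseteq> A" "set (map fst w2) \<subseteq> A"
    "x = act1 (act0 a (word_loop z0 mloop0 w1)) (word_loop z1 mloop1 w2)"
    using assms(2) unfolding word_forms_def by blast
  obtain b u1 u2 where y: "b \<in> A" "set (map fst u1) \<subseteq> A" "set (map fst u2) \<subseteq> A"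
    "y = act1 (act0 b (word_loop z0 mloop0 u1)) (word_loop z1 mloop1 u2)"
    using assms(3) unfolding word_forms_def by blast
  have xX: "a \<in> X" "set (map fst w1) \<subseteq> X" "set (map fst w2) \<subseteq> X"
    and yX: "b \<in> X" "set (map fst u1) \<subseteq> X" "set (map fst u2) \<subseteq> X" "y \<in> X"
    using x y A word_forms_subset[OF A] assms(3) by auto
  have "act0 x (signed_loop mloop0 y e)
      = act1 (act0 a (word_loop z0 mloop0 (w1 @ word_inverse u1 @ [(b,e)] @ u1))) (word_loop z1 mloop1 w2)"
    unfolding x(4) using homotopic_signed_mloop0_word_form[OF yX(1-3), of e, folded y(4)]
    by (rule act0_word_form[OF xX yX(2,1) W0.loop_in_signed_loop[OF yX(4)]])
  moreover have "set (map fst (w1 @ word_inverse u1 @ [(b,e)] @ u1)) \<subseteq> A" using x(2) y(1,2) by auto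
  ultimately show "act0 x (signed_loop mloop0 y e) \<in> word_forms A"
    unfolding word_forms_def using x(1,3) by blast
  have "act1 x (signed_loop mloop1 y e)
      = act1 (act0 a (word_loop z0 mloop0 w1)) (word_loop z1 mloop1 (w2 @ word_inverse u2 @ [(b,e)] @ u2))"
    unfolding x(4)
    using homotopic_signed_mloop1_word_form[OF yX(1-3), of e, folded y(4)]
    by (rule act1_word_form[OF act0_in[OF xX(1) W0.loop_in_word_loop[OF xX(2)]] xX(3) yX(3,1)
          W1.loop_in_signed_loop[OF yX(4)]])
  moreover have "set (map fst (w2 @ word_inverse u2 @ [(b,e)] @ u2)) \<subseteq> A" using x(3) y(1,3) by auto
  ultimately show "act1 x (signed_loop mloop1 y e) \<in> word_forms A"
    unfolding word_forms_def using x(1,2) by blast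
qed

lemma generated_subset_word_forms:
  assumes "A \<subseteq> X" shows "generated X bup bdown A \<subseteq> word_forms A"
  unfolding generated_def
proof (rule Inter_lower, safe)
  fix x y assume xy: "x \<in> word_forms A" "y \<in> word_forms A"
  then have "x \<in> X" "y \<in> X" using word_forms_subset[OF assms] by auto
  then show "bup x y \<in> word_forms A" "bdown x y \<in> word_forms A"
    "bar_up X bup bdown x y \<in> word_forms A" "bar_down X bup bdown x y \<in> word_forms A"
    using signed_up_eq[of x y True] signed_up_eq[of x y False]
      signed_down_eq[of x y True] signed_down_eq[of x y False]
      word_forms_closed[OF assms xy] by simp_all
qed (use word_forms_subset[OF assms] subset_word_forms[OF assms] in blast)+

lemma word_normal_form:
  assumes "generating_set X bup bdown A" "x \<in> X"
  shows "\<exists>a\<in>A. \<exists>w1 w2. set (map fst w1) \<subseteq> A \<and> set (map fst w2) \<subseteq> A \<and>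
    x = word_act bdown (bar_down X bup bdown) (word_act bup (bar_up X bup bdown) a w1) w2"
proof -
  have A: "A \<subseteq> X" and "generated X bup bdown A = X"
    using assms(1) unfolding generating_set_def by auto
  then have "x \<in> word_forms A" using generated_subset_word_forms assms(2) by blast
  then obtain a w1 w2 where "a \<in> A" "set (map fst w1) \<subseteq> A" "set (map fst w2) \<subseteq> A"
    "x = act1 (act0 a (word_loop z0 mloop0 w1)) (word_loop z1 mloop1 w2)"
    unfolding word_forms_def by blast
  moreover have "a \<in> X" "set (map fst w1) \<subseteq> X" "set (map fst w2) \<subseteq> X"
    using calculation(1-3) A by auto
  ultimately show ?thesis
    using word_act_up word_act_down act0_in[OF _ W0.loop_in_word_loop] by metis
qed

end

(* HOL-Algebra's polynomial constant up would otherwise capture the name bound in the statement. *)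
hide_const (open) UnivPoly.up

theorem mainTheorem9:
  fixes n :: nat
    and phi :: "nat \<Rightarrow> complex \<Rightarrow> complex \<Rightarrow> real^4"
    and h :: "real^3 \<Rightarrow> real^4" and h' :: "real^4 \<Rightarrow> real^3"
    and v :: "real^3" and z0 z1 :: "real^4"
    and A :: "bpair set set"
  defines "X \<equiv> topbiq n phi z0 z1"
      and "up \<equiv> bq_up n phi z0 z1"
      and "down \<equiv> bq_down n phi z0 z1"
  assumes tub: "tubular n phi"
    and ball: "homeomorphism (cball 0 1) (h ` cball 0 1) h h'"
    and ballS3: "h ` cball 0 1 \<subseteq> S3"
    and nbhd_in: "nbhd n phi \<subseteq> h ` ball 0 1"
    and v: "norm v = 1" and z0: "z0 = h v" and z1: "z1 = h (- v)"
    and gen: "generating_set X up down A"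
  shows "\<forall>x\<in>X. \<exists>a\<in>A. \<exists>w1 w2.
           set (map fst w1) \<subseteq> A \<and> set (map fst w2) \<subseteq> A \<and>
           x = word_act down (bar_down X up down)
                 (word_act up (bar_up X up down) a w1) w2"
proof -
  interpret tubular_link n phi by unfold_locales (rule tub)
  interpret L: link_biquandle n phi z0 z1
  proof unfold_locales
    show "bdry n phi \<subseteq> ext n phi" by (rule bdry_subset_ext[OF ball ballS3 nbhd_in])
    show "z0 \<in> ext n phi" "z1 \<in> ext n phi"
      using homeomorphic_ball_sphere_in_ext[OF ball ballS3 nbhd_in] v unfolding z0 z1 by simp_all
  qed
  show ?thesis using L.word_normal_form gen unfolding X_def up_def down_def by blast
qed

end
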